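(* In the algorithm setup, for every variable $i$, factor $a\in\partial i$ and $0\le\ell\le L-1$: $\mathbb E[u^{\ell+1}_{i\to a}\mid\mathcal G_i^\ell]=0$ and $\mathbb E[u^{\ell+1}_i\mid\mathcal G_i^\ell]=0$.
   Context: Algorithm setup. Fix $r\ge2$ and a predicate $f:\{\pm1\}^r\to\{0,1\}$, identified with its multilinear extension $f(x)=\sum_{S\subseteq[r]}\hat f(S)\prod_{\iota\in S}x_\iota$ on $\mathbb R^r$, and assume $\hat f(S)=0$ whenever $|S|=1$. Fix $\delta>0$ and let $L=\lfloor1/\delta\rfloor$. Let $G=(V,E)$ be a hypergraph whose hyperedges (factors) $a$ are ordered $r$-tuples $\partial a=(v_{a,1},\dots,v_{a,r})$ of distinct vertices (variables), which is $d$-index-regular: every variable lies in exactly $d$ factors, and for each $\iota\in[r]$ it is the $\iota$-th entry of exactly $d/r$ factors. Write $\partial i$ for the set of factors containing $i$. Assume the bipartite variable–factor incidence graph (factor graph) of $G$ has no cycle of length less than $4L+4$. For a factor $a$ and $j\in\partial a$, $\mathsf D_{j;a}f$ is the partial derivative of (multilinear) $f$ in the coordinate $\iota$ with $v_{a,\iota}=j$. Fix $K>0$ and functions $F_{\to,\ell},F_\ell:\mathbb R^\ell\to[-K,K]$ for $0\le\ell\le L-1$ (constants when $\ell=0$). Randomness: $z_i^0$, $i\in V$, i.i.d. $\mathcal N(0,\delta)$; set $z^0_{i\to a}=z_i^0$, $w_i^0=w^0_{i\to a}=0$. For $\ell=0,\dots,L-1$: $A^\ell_{i\to a}=F_{\to,\ell}(u^1_{i\to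 a},\dots,u^\ell_{i\to a})$, $A^\ell_i=F_\ell(u^1_i,\dots,u^\ell_i)$; with $\mathbf z^\ell_{\partial b\to b}=(z^\ell_{v_{b,1}\to b},\dots,z^\ell_{v_{b,r}\to b})$, $w^{\ell+1}_{i\to a}=(d-1)^{-1/2}\sum_{b\in\partial i\setminus a}\mathsf D_{i;b}f(\mathbf z^\ell_{\partial b\to b})$, $u^{\ell+1}_{i\to a}=w^{\ell+1}_{i\to a}-w^\ell_{i\to a}$, $z^{\ell+1}_{i\to a}=z_i^0+\sum_{s=1}^{\ell+1}A^{s-1}_{i\to a}u^s_{i\to a}$; $w^{\ell+1}_i=d^{-1/2}\sum_{b\in\partial i}\mathsf D_{i;b}f(\mathbf z^\ell_{\partial b\to b})$, $u^{\ell+1}_i=w^{\ell+1}_i-w^\ell_i$, $z^{\ell+1}_i=z_i^0+\sum_{s=1}^{\ell+1}A^{s-1}_iu^s_i$. Sigma-algebras: the distance between variables $i,j$ is the least $k$ such that there are variables $i=v_0,\dots,v_k=j$ with consecutive ones sharing a factor. $\mathsf B_i(\ell)$ is the set of variables at distance $\le\ell$ from $i$; $\mathsf B_{i\to a}(\ell)$ is the set of variables reachable from $i$ by such a path of length $\le\ell$ whose first step does not use factor $a$ (including $i$ itself). $\mathcal G_i^\ell=\sigma(z_j^0:j\in\mathsf B_i(\ell))$, $\mathcal G_{i\to a}^\ell=\sigma(z_j^0:j\in\mathsf B_{i\to a}(\ell))$. *)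

theory Defs
  imports "HOL-Probability.Probability"
begin

definition cube :: "nat \<Rightarrow> (nat \<Rightarrow> real) set" where
  "cube r = PiE {..<r} (\<lambda>_. {-1, 1})"

definition fcoef :: "nat \<Rightarrow> ((nat \<Rightarrow> real) \<Rightarrow> real) \<Rightarrow> nat set \<Rightarrow> real" where
  "fcoef r f S = (\<Sum>x\<in>cube r. f x * (\<Prod>\<iota>\<in>S. x \<iota>)) / 2 ^ r"

definition mlext :: "nat \<Rightarrow> ((nat \<Rightarrow> real) \<Rightarrow> real) \<Rightarrow> (nat \<Rightarrow> real) \<Rightarrow> real" where
  "mlext r f x = (\<Sum>S\<in>Pow {..<r}. fcoef r f S * (\<Prod>\<iota>\<in>S. x \<iota>))"

definition mlderiv :: "nat \<Rightarrow> ((nat \<Rightarrow> real) \<Rightarrow> real) \<Rightarrow> nat \<Rightarrow> (nat \<Rightarrow> real) \<Rightarrow> real" where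
  "mlderiv r f \<iota> x = (\<Sum>S\<in>{S. S \<subseteq> {..<r} \<and> \<iota> \<in> S}. fcoef r f S * (\<Prod>\<kappa>\<in>S - {\<iota>}. x \<kappa>))"

text \<open>vtx a \<iota> is the \<iota>-th entry (\<iota> < r) of the factor a.\<close>
definition hypergraph :: "'v set \<Rightarrow> 'f set \<Rightarrow> ('f \<Rightarrow> nat \<Rightarrow> 'v) \<Rightarrow> nat \<Rightarrow> bool" where
  "hypergraph V E vtx r \<longleftrightarrow> finite V \<and> finite E \<and>
     (\<forall>a\<in>E. inj_on (vtx a) {..<r} \<and> (\<forall>\<iota><r. vtx a \<iota> \<in> V))"

definition fac_of :: "'f set \<Rightarrow> ('f \<Rightarrow> nat \<Rightarrow> 'v) \<Rightarrow> nat \<Rightarrow> 'v \<Rightarrow> 'f set" where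
  "fac_of E vtx r i = {b\<in>E. i \<in> vtx b ` {..<r}}"

definition pos_in :: "('f \<Rightarrow> nat \<Rightarrow> 'v) \<Rightarrow> nat \<Rightarrow> 'f \<Rightarrow> 'v \<Rightarrow> nat" where
  "pos_in vtx r b i = (THE \<iota>. \<iota> < r \<and> vtx b \<iota> = i)"

definition index_regular :: "'v set \<Rightarrow> 'f set \<Rightarrow> ('f \<Rightarrow> nat \<Rightarrow> 'v) \<Rightarrow> nat \<Rightarrow> nat \<Rightarrow> bool" where
  "index_regular V E vtx r d \<longleftrightarrow>
     (\<forall>i\<in>V. card (fac_of E vtx r i) = d \<and>
        (\<forall>\<iota><r. real (card {a\<in>E. vtx a \<iota> = i}) = real d / real r))"

text \<open>A cycle of length 2k in the bipartite variable-factor incidence graph: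
  distinct variables vs 0..vs (k-1), distinct factors fs 0..fs (k-1), with
  vs t and vs ((t+1) mod k) both in fs t.\<close>
definition fg_cycle :: "'f set \<Rightarrow> ('f \<Rightarrow> nat \<Rightarrow> 'v) \<Rightarrow> nat \<Rightarrow> nat \<Rightarrow> bool" where
  "fg_cycle E vtx r k \<longleftrightarrow> 2 \<le> k \<and> (\<exists>vs :: nat \<Rightarrow> 'v. \<exists>fs :: nat \<Rightarrow> 'f.
      inj_on vs {..<k} \<and> inj_on fs {..<k} \<and>
      (\<forall>t<k. fs t \<in> E \<and> vs t \<in> vtx (fs t) ` {..<r} \<and> vs ((t + 1) mod k) \<in> vtx (fs t) ` {..<r}))"

definition girth_ge :: "'f set \<Rightarrow> ('f \<Rightarrow> nat \<Rightarrow> 'v) \<Rightarrow> nat \<Rightarrow> nat \<Rightarrow> bool" where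
  "girth_ge E vtx r g \<longleftrightarrow> (\<forall>k. 2 * k < g \<longrightarrow> \<not> fg_cycle E vtx r k)"

definition ball_var :: "'v set \<Rightarrow> 'f set \<Rightarrow> ('f \<Rightarrow> nat \<Rightarrow> 'v) \<Rightarrow> nat \<Rightarrow> 'v \<Rightarrow> nat \<Rightarrow> 'v set" where
  "ball_var V E vtx r i l = {j\<in>V. \<exists>k\<le>l. \<exists>p :: nat \<Rightarrow> 'v. p 0 = i \<and> p k = j \<and>
      (\<forall>t<k. p t \<in> V \<and> (\<exists>b\<in>E. p t \<in> vtx b ` {..<r} \<and> p (Suc t) \<in> vtx b ` {..<r}))}"

text \<open>Product space of i.i.d. N(0,\<delta>) variables z_i^0 = \<omega> i, i \<in> V.\<close>
definition gauss_space :: "real \<Rightarrow> 'v set \<Rightarrow> ('v \<Rightarrow> real) measure" where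
  "gauss_space \<delta> V = PiM V (\<lambda>_. density lborel (normal_density 0 (sqrt \<delta>)))"

definition gen_sigma :: "('v \<Rightarrow> real) measure \<Rightarrow> 'v set \<Rightarrow> ('v \<Rightarrow> real) measure" where
  "gen_sigma M B = sigma (space M)
      {(\<lambda>\<omega>. \<omega> j) -` A \<inter> space M | j A. j \<in> B \<and> A \<in> sets borel}"

text \<open>H is a history of messages: H s i a = w^s_{i\<rightarrow>a} (for one sample \<omega>).\<close>
definition u_of :: "(nat \<Rightarrow> 'v \<Rightarrow> 'f \<Rightarrow> real) \<Rightarrow> nat \<Rightarrow> 'v \<Rightarrow> 'f \<Rightarrow> real" where
  "u_of H s i a = H s i a - H (s - 1) i a"

text \<open>z^l_{i\<rightarrow>a} = z_i^0 + sum_{s=1}^l A^{s-1}_{i\<rightarrow>a} u^s_{i\<rightarrow>a},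
  A^{s-1}_{i\<rightarrow>a} = F_{\<rightarrow>,s-1}(u^1,...,u^{s-1}); the vector argument of F is
  represented as an element of PiE {1..s-1} UNIV.\<close>
definition z_of :: "(nat \<Rightarrow> (nat \<Rightarrow> real) \<Rightarrow> real) \<Rightarrow> ('v \<Rightarrow> real) \<Rightarrow>
    (nat \<Rightarrow> 'v \<Rightarrow> 'f \<Rightarrow> real) \<Rightarrow> nat \<Rightarrow> 'v \<Rightarrow> 'f \<Rightarrow> real" where
  "z_of Fto \<omega> H l i a = \<omega> i +
     (\<Sum>s\<in>{1..l}. Fto (s - 1) (restrict (\<lambda>t. u_of H t i a) {1..s - 1}) * u_of H s i a)"

definition w_new :: "nat \<Rightarrow> ((nat \<Rightarrow> real) \<Rightarrow> real) \<Rightarrow> nat \<Rightarrow> 'f set \<Rightarrow> ('f \<Rightarrow> nat \<Rightarrow> 'v) \<Rightarrow>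
    (nat \<Rightarrow> (nat \<Rightarrow> real) \<Rightarrow> real) \<Rightarrow> ('v \<Rightarrow> real) \<Rightarrow>
    (nat \<Rightarrow> 'v \<Rightarrow> 'f \<Rightarrow> real) \<Rightarrow> nat \<Rightarrow> 'v \<Rightarrow> 'f \<Rightarrow> real" where
  "w_new r f d E vtx Fto \<omega> H l i a =
     (1 / sqrt (real d - 1)) *
       (\<Sum>b\<in>fac_of E vtx r i - {a}.
          mlderiv r f (pos_in vtx r b i) (\<lambda>\<iota>. z_of Fto \<omega> H l (vtx b \<iota>) b))"

text \<open>whist l s = w^s (valid for s \<le> l).\<close>
primrec whist :: "nat \<Rightarrow> ((nat \<Rightarrow> real) \<Rightarrow> real) \<Rightarrow> nat \<Rightarrow> 'f set \<Rightarrow> ('f \<Rightarrow> nat \<Rightarrow> 'v) \<Rightarrow>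
    (nat \<Rightarrow> (nat \<Rightarrow> real) \<Rightarrow> real) \<Rightarrow> ('v \<Rightarrow> real) \<Rightarrow> nat \<Rightarrow> nat \<Rightarrow> 'v \<Rightarrow> 'f \<Rightarrow> real" where
  "whist r f d E vtx Fto \<omega> 0 = (\<lambda>s i a. 0)"
| "whist r f d E vtx Fto \<omega> (Suc l) =
     (whist r f d E vtx Fto \<omega> l)
       (Suc l := w_new r f d E vtx Fto \<omega> (whist r f d E vtx Fto \<omega> l) l)"

definition wmsg :: "nat \<Rightarrow> ((nat \<Rightarrow> real) \<Rightarrow> real) \<Rightarrow> nat \<Rightarrow> 'f set \<Rightarrow> ('f \<Rightarrow> nat \<Rightarrow> 'v) \<Rightarrow>
    (nat \<Rightarrow> (nat \<Rightarrow> real) \<Rightarrow> real) \<Rightarrow> nat \<Rightarrow> 'v \<Rightarrow> 'f \<Rightarrow> ('v \<Rightarrow> real) \<Rightarrow> real" where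
  "wmsg r f d E vtx Fto l i a \<omega> = whist r f d E vtx Fto \<omega> l l i a"

definition umsg :: "nat \<Rightarrow> ((nat \<Rightarrow> real) \<Rightarrow> real) \<Rightarrow> nat \<Rightarrow> 'f set \<Rightarrow> ('f \<Rightarrow> nat \<Rightarrow> 'v) \<Rightarrow>
    (nat \<Rightarrow> (nat \<Rightarrow> real) \<Rightarrow> real) \<Rightarrow> nat \<Rightarrow> 'v \<Rightarrow> 'f \<Rightarrow> ('v \<Rightarrow> real) \<Rightarrow> real" where
  "umsg r f d E vtx Fto l i a \<omega> =
     wmsg r f d E vtx Fto l i a \<omega> - wmsg r f d E vtx Fto (l - 1) i a \<omega>"

definition wfull :: "nat \<Rightarrow> ((nat \<Rightarrow> real) \<Rightarrow> real) \<Rightarrow> nat \<Rightarrow> 'f set \<Rightarrow> ('f \<Rightarrow> nat \<Rightarrow> 'v) \<Rightarrow>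
    (nat \<Rightarrow> (nat \<Rightarrow> real) \<Rightarrow> real) \<Rightarrow> nat \<Rightarrow> 'v \<Rightarrow> ('v \<Rightarrow> real) \<Rightarrow> real" where
  "wfull r f d E vtx Fto l i \<omega> =
     (if l = 0 then 0 else
       (1 / sqrt (real d)) *
         (\<Sum>b\<in>fac_of E vtx r i.
            mlderiv r f (pos_in vtx r b i)
              (\<lambda>\<iota>. z_of Fto \<omega> (whist r f d E vtx Fto \<omega> (l - 1)) (l - 1) (vtx b \<iota>) b)))"

definition ufull :: "nat \<Rightarrow> ((nat \<Rightarrow> real) \<Rightarrow> real) \<Rightarrow> nat \<Rightarrow> 'f set \<Rightarrow> ('f \<Rightarrow> nat \<Rightarrow> 'v) \<Rightarrow>
    (nat \<Rightarrow> (nat \<Rightarrow> real) \<Rightarrow> real) \<Rightarrow> nat \<Rightarrow> 'v \<Rightarrow> ('v \<Rightarrow> real) \<Rightarrow> real" where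
  "ufull r f d E vtx Fto l i \<omega> =
     wfull r f d E vtx Fto l i \<omega> - wfull r f d E vtx Fto (l - 1) i \<omega>"

end

theory Submission
  imports Defs
begin

text \<open>Up to depth \<open>L\<close> around \<open>i\<close> the factor graph is a tree. Hence an input \<open>z^0_m\<close> with \<open>m\<close>
  outside \<open>B_i(l)\<close> reaches \<open>i\<close> along a single branch and enters the multilinear \<open>f\<close> through one
  argument only, so \<open>u^{l+1}\<close> is affine in \<open>z^0_m\<close>. Moreover \<open>u^{l+1}\<close> vanishes when all these
  inputs are set to \<open>0\<close>, because \<open>f\<close> has no degree-one Fourier coefficients. For \<open>A\<close> in
  \<open>G_i^l\<close>, integrating \<open>1_A u^{l+1}\<close> against the centred Gaussian inputs outside \<open>B_i(l)\<close> one at a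
  time replaces them by \<open>0\<close>, so \<open>E[1_A u^{l+1}] = 0\<close>.\<close>

section \<open>Dependence on a single coordinate\<close>

definition coord_indep :: "'v \<Rightarrow> (('v \<Rightarrow> real) \<Rightarrow> 'b) \<Rightarrow> bool" where
  "coord_indep m h \<longleftrightarrow> (\<forall>w y. h (w(m := y)) = h w)"

definition coord_affine :: "'v \<Rightarrow> (('v \<Rightarrow> real) \<Rightarrow> real) \<Rightarrow> bool" where
  "coord_affine m h \<longleftrightarrow>
     (\<forall>w y. h (w(m := y)) = h (w(m := 0)) + y * (h (w(m := 1)) - h (w(m := 0))))"

lemma coord_indepD: "coord_indep m h \<Longrightarrow> h (w(m := y)) = h w"
  unfolding coord_indep_def by blast

lemma coord_affineD:
  "coord_affine m h \<Longrightarrow> h (w(m := y)) = h (w(m := 0)) + y * (h (w(m := 1)) - h (w(m := 0)))"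
  unfolding coord_affine_def by blast

lemma coord_indep_imp_affine: "coord_indep m h \<Longrightarrow> coord_affine m h"
  unfolding coord_affine_def coord_indep_def by (metis add.right_neutral diff_self mult_zero_right)

lemma coord_indep_const: "coord_indep m (\<lambda>w. c)"
  unfolding coord_indep_def by simp

lemma coord_indep_component: "m \<noteq> j \<Longrightarrow> coord_indep m (\<lambda>w. w j)"
  unfolding coord_indep_def by simp

lemma coord_affine_component: "coord_affine m (\<lambda>w. w j)"
  unfolding coord_affine_def by auto

lemma coord_indep_comp: "coord_indep m g \<Longrightarrow> coord_indep m (\<lambda>w. F (g w))"
  unfolding coord_indep_def by simp

lemma coord_indep_comp2:
  "coord_indep m g \<Longrightarrow> coord_indep m h \<Longrightarrow> coord_indep m (\<lambda>w. F (g w) (h w))"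
  unfolding coord_indep_def by simp

lemma coord_indep_sum:
  "(\<And>x. x \<in> T \<Longrightarrow> coord_indep m (g x)) \<Longrightarrow> coord_indep m (\<lambda>w. \<Sum>x\<in>T. g x w :: real)"
  unfolding coord_indep_def by simp

lemma coord_indep_prod:
  "(\<And>x. x \<in> T \<Longrightarrow> coord_indep m (g x)) \<Longrightarrow> coord_indep m (\<lambda>w. \<Prod>x\<in>T. g x w :: real)"
  unfolding coord_indep_def by simp

lemma coord_indep_restrict:
  "(\<And>t. t \<in> I \<Longrightarrow> coord_indep m (g t)) \<Longrightarrow> coord_indep m (\<lambda>w. restrict (\<lambda>t. g t w) I)"
  unfolding coord_indep_def by (auto intro!: restrict_ext)

lemma coord_affine_add:
  assumes "coord_affine m g" "coord_affine m h"
  shows "coord_affine m (\<lambda>w. g w + h w)"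
  unfolding coord_affine_def
proof (intro allI)
  fix w y
  show "g (w(m := y)) + h (w(m := y)) = g (w(m := 0)) + h (w(m := 0)) +
      y * (g (w(m := 1)) + h (w(m := 1)) - (g (w(m := 0)) + h (w(m := 0))))"
    unfolding coord_affineD[OF assms(1), of w y] coord_affineD[OF assms(2), of w y]
    by (simp add: algebra_simps)
qed

lemma coord_affine_mult_indep:
  assumes "coord_indep m g" "coord_affine m h"
  shows "coord_affine m (\<lambda>w. g w * h w)"
  unfolding coord_affine_def
proof (intro allI)
  fix w y
  show "g (w(m := y)) * h (w(m := y)) = g (w(m := 0)) * h (w(m := 0)) +
      y * (g (w(m := 1)) * h (w(m := 1)) - g (w(m := 0)) * h (w(m := 0)))"
    unfolding coord_indepD[OF assms(1)] coord_affineD[OF assms(2), of w y]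
    by (simp add: algebra_simps)
qed

lemma coord_affine_cmult: "coord_affine m h \<Longrightarrow> coord_affine m (\<lambda>w. c * h w)"
  by (rule coord_affine_mult_indep[OF coord_indep_const])

lemma coord_affine_diff:
  "coord_affine m g \<Longrightarrow> coord_affine m h \<Longrightarrow> coord_affine m (\<lambda>w. g w - h w)"
  using coord_affine_add[of m g "\<lambda>w. (-1) * h w"] coord_affine_cmult[of m h "-1"] by simp

lemma coord_affine_sum:
  "finite T \<Longrightarrow> (\<And>x. x \<in> T \<Longrightarrow> coord_affine m (g x)) \<Longrightarrow> coord_affine m (\<lambda>w. \<Sum>x\<in>T. g x w)"
  by (induction T rule: finite_induct)
    (simp_all add: coord_affine_add coord_indep_imp_affine coord_indep_const)

lemma coord_affine_prod:
  assumes "finite T" and "\<And>x. x \<in> T \<Longrightarrow> x \<noteq> z \<Longrightarrow> coord_indep m (g x)"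
    and "coord_affine m (g z)"
  shows "coord_affine m (\<lambda>w. \<Prod>x\<in>T. g x w)"
proof (cases "z \<in> T")
  case True
  then have "(\<lambda>w. \<Prod>x\<in>T. g x w) = (\<lambda>w. (\<Prod>x\<in>T - {z}. g x w) * g z w)"
    using assms(1) by (auto simp: prod.remove mult.commute)
  then show ?thesis
    using assms by (auto intro!: coord_affine_mult_indep coord_indep_prod)
next
  case False
  then show ?thesis using assms(2) by (intro coord_indep_imp_affine coord_indep_prod) auto
qed

lemma finite_sets_containing: "finite {S. S \<subseteq> {..<r} \<and> (\<iota>::nat) \<in> S}"
  by (rule finite_subset[of _ "Pow {..<r}"]) auto

lemma mlderiv_cong:
  "(\<And>\<kappa>. \<kappa> < r \<Longrightarrow> \<kappa> \<noteq> \<iota> \<Longrightarrow> x \<kappa> = x' \<kappa>) \<Longrightarrow> mlderiv r f \<iota> x = mlderiv r f \<iota> x'"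
  unfolding mlderiv_def by (intro sum.cong refl arg_cong2[where f="(*)"] prod.cong) auto

lemma mlderiv_eq_0:
  assumes "\<forall>\<iota><r. fcoef r f {\<iota>} = 0" and "\<And>\<kappa>. \<kappa> < r \<Longrightarrow> \<kappa> \<noteq> \<iota> \<Longrightarrow> x \<kappa> = 0"
  shows "mlderiv r f \<iota> x = 0"
  unfolding mlderiv_def
proof (rule sum.neutral, rule ballI)
  fix S assume S: "S \<in> {S. S \<subseteq> {..<r} \<and> \<iota> \<in> S}"
  show "fcoef r f S * (\<Prod>\<kappa>\<in>S - {\<iota>}. x \<kappa>) = 0"
  proof (cases "S = {\<iota>}")
    case True
    then show ?thesis using assms(1) S by auto
  next
    case False
    then obtain \<kappa> where "\<kappa> \<in> S" "\<kappa> \<noteq> \<iota>" using S by auto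
    moreover have "finite S" using S finite_subset[of S "{..<r}"] by auto
    ultimately have "(\<Prod>\<kappa>\<in>S - {\<iota>}. x \<kappa>) = 0" using S assms(2) by (intro prod_zero) auto
    then show ?thesis by simp
  qed
qed

lemma mlderiv_coord_indep:
  "(\<And>\<kappa>. \<kappa> < r \<Longrightarrow> \<kappa> \<noteq> \<iota> \<Longrightarrow> coord_indep m (X \<kappa>)) \<Longrightarrow>
    coord_indep m (\<lambda>w. mlderiv r f \<iota> (\<lambda>\<kappa>. X \<kappa> w))"
  unfolding mlderiv_def
  by (intro coord_indep_sum coord_indep_comp2[where F="(*)"] coord_indep_const coord_indep_prod) auto

lemma mlderiv_coord_affine:
  assumes "\<And>\<kappa>. \<kappa> < r \<Longrightarrow> \<kappa> \<noteq> \<iota> \<Longrightarrow> \<kappa> \<noteq> \<kappa>\<^sub>0 \<Longrightarrow> coord_indep m (X \<kappa>)"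
    and "coord_affine m (X \<kappa>\<^sub>0)"
  shows "coord_affine m (\<lambda>w. mlderiv r f \<iota> (\<lambda>\<kappa>. X \<kappa> w))"
  unfolding mlderiv_def
proof (intro coord_affine_sum[OF finite_sets_containing] coord_affine_cmult)
  fix S assume "S \<in> {S. S \<subseteq> {..<r} \<and> \<iota> \<in> S}"
  then show "coord_affine m (\<lambda>w. \<Prod>\<kappa>\<in>S - {\<iota>}. X \<kappa> w)"
    using assms finite_subset[of S "{..<r}"] by (intro coord_affine_prod[where z=\<kappa>\<^sub>0]) auto
qed

definition zero_on :: "'v set \<Rightarrow> ('v \<Rightarrow> real) \<Rightarrow> 'v \<Rightarrow> real" where
  "zero_on Q w = (\<lambda>j. if j \<in> Q then 0 else w j)"

lemma zero_on_empty [simp]: "zero_on {} w = w"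
  unfolding zero_on_def by simp

lemma zero_on_singleton: "zero_on {m} w = w(m := 0)"
  unfolding zero_on_def by auto

lemma zero_on_insert: "zero_on Q (w(m := 0)) = zero_on (insert m Q) w"
  unfolding zero_on_def by auto

lemma zero_on_update: "m \<notin> Q \<Longrightarrow> zero_on Q (w(m := y)) = (zero_on Q w)(m := y)"
  unfolding zero_on_def by auto

lemma coord_affine_zero_on:
  assumes "m \<notin> Q" "coord_affine m h"
  shows "coord_affine m (\<lambda>w. h (zero_on Q w))"
  unfolding coord_affine_def zero_on_update[OF assms(1)]
  using coord_affineD[OF assms(2)] by blast

section \<open>The Gaussian product space\<close>

locale gaussian_product =
  fixes V :: "'v set" and \<delta> :: real
  assumes finite_V: "finite V" and \<delta>_pos: "0 < \<delta>"
begin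

abbreviation N :: "real measure" where
  "N \<equiv> density lborel (normal_density 0 (sqrt \<delta>))"

abbreviation G :: "('v \<Rightarrow> real) measure" where
  "G \<equiv> gauss_space \<delta> V"

lemma prob_space_N: "prob_space N"
  using \<delta>_pos by (intro prob_space_normal_density) simp

lemma G_eq_PiM: "G = PiM V (\<lambda>_. N)"
  by (simp add: gauss_space_def)

lemma product_prob_space_N: "product_prob_space (\<lambda>_::'v. N)"
  unfolding product_prob_space_def product_prob_space_axioms_def product_sigma_finite_def
  using prob_space_N by (auto simp: prob_space_imp_sigma_finite)

lemma prob_space_G: "prob_space G"
  unfolding G_eq_PiM by (rule prob_space_PiM) (rule prob_space_N)

lemma space_G: "space G = PiE V (\<lambda>_. UNIV)"
  unfolding G_eq_PiM by (simp add: space_PiM)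

lemma measurable_component_G: "j \<in> V \<Longrightarrow> (\<lambda>w. w j) \<in> borel_measurable G"
  unfolding G_eq_PiM using measurable_component_singleton[of j V "\<lambda>_. N"]
  by (simp cong: measurable_cong_sets)

lemma integrable_N_id: "integrable N (\<lambda>x. x)" and integral_N_id: "integral\<^sup>L N (\<lambda>x. x) = 0"
proof -
  have "has_bochner_integral lborel (\<lambda>x. normal_density 0 (sqrt \<delta>) x * (x - 0) ^ (2 * 0 + 1)) 0"
    using \<delta>_pos by (intro normal_moment_odd) simp
  then have h: "has_bochner_integral lborel (\<lambda>x. normal_density 0 (sqrt \<delta>) x *\<^sub>R x) 0"
    by simp
  show "integrable N (\<lambda>x. x)"
    using integrable.intros[OF h] by (subst integrable_density) (auto simp: normal_density_nonneg)
  show "integral\<^sup>L N (\<lambda>x. x) = 0"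
    using h by (subst integral_density) (auto simp: normal_density_nonneg has_bochner_integral_integral_eq)
qed

lemma integrable_N_poly: "integrable N (\<lambda>x. (1 + \<bar>x\<bar>) ^ p)"
proof -
  have abs_moment: "integrable N (\<lambda>x. \<bar>x\<bar> ^ k)" for k
  proof -
    have "integrable lborel (\<lambda>x. normal_density 0 (sqrt \<delta>) x * \<bar>x - 0\<bar> ^ k)"
      using \<delta>_pos by (intro integrable_normal_moment_abs) simp
    then show ?thesis by (subst integrable_density) (auto simp: normal_density_nonneg)
  qed
  have "(\<lambda>x::real. (1 + \<bar>x\<bar>) ^ p) = (\<lambda>x. \<Sum>k\<le>p. of_nat (p choose k) * \<bar>x\<bar> ^ k)"
    by (rule ext, subst add.commute, subst binomial_ring) simp
  then show ?thesis
    by (auto intro!: Bochner_Integration.integrable_sum Bochner_Integration.integrable_mult_right abs_moment)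
qed

definition weight :: "('v \<Rightarrow> real) \<Rightarrow> real" where
  "weight w = (\<Prod>j\<in>V. 1 + \<bar>w j\<bar>)"

lemma weight_ge_1: "1 \<le> weight w"
  unfolding weight_def by (rule prod_ge_1) auto

lemma integrable_weight_power: "integrable G (\<lambda>w. weight w ^ p)"
proof -
  have "(\<lambda>w. weight w ^ p) = (\<lambda>w. \<Prod>j\<in>V. (\<lambda>j x. (1 + \<bar>x\<bar>) ^ p) j (w j))"
    unfolding weight_def by (simp add: prod_power_distrib)
  then show ?thesis
    unfolding G_eq_PiM using product_prob_space_N
    by (simp add: product_sigma_finite.product_integrable_prod[OF _ finite_V integrable_N_poly]
        product_prob_space_def)
qed

lemma abs_component_le_weight: "j \<in> V \<Longrightarrow> \<bar>w j\<bar> \<le> weight w"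
proof -
  assume j: "j \<in> V"
  have "weight w = (1 + \<bar>w j\<bar>) * (\<Prod>k\<in>V - {j}. 1 + \<bar>w k\<bar>)"
    unfolding weight_def using j finite_V by (simp add: prod.remove)
  moreover have "(1 + \<bar>w j\<bar>) * 1 \<le> (1 + \<bar>w j\<bar>) * (\<Prod>k\<in>V - {j}. 1 + \<bar>w k\<bar>)"
    by (intro mult_left_mono prod_ge_1) auto
  ultimately show ?thesis by simp
qed

definition tame :: "(('v \<Rightarrow> real) \<Rightarrow> real) \<Rightarrow> bool" where
  "tame h \<longleftrightarrow> h \<in> borel_measurable G \<and>
     (\<exists>C\<ge>0. \<exists>p. \<forall>w\<in>space G. \<bar>h w\<bar> \<le> C * weight w ^ p)"

lemma tameI:
  "h \<in> borel_measurable G \<Longrightarrow> C \<ge> 0 \<Longrightarrow> (\<And>w. w \<in> space G \<Longrightarrow> \<bar>h w\<bar> \<le> C * weight w ^ p) \<Longrightarrow> tame h"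
  unfolding tame_def by blast

lemma tameE:
  assumes "tame h"
  obtains C p where "h \<in> borel_measurable G" "C \<ge> 0" "\<And>w. w \<in> space G \<Longrightarrow> \<bar>h w\<bar> \<le> C * weight w ^ p"
  using assms unfolding tame_def by blast

lemma tame_integrable: "tame h \<Longrightarrow> integrable G h"
proof (elim tameE)
  fix C p assume h: "h \<in> borel_measurable G" "C \<ge> 0" "\<And>w. w \<in> space G \<Longrightarrow> \<bar>h w\<bar> \<le> C * weight w ^ p"
  show "integrable G h"
  proof (rule Bochner_Integration.integrable_bound[OF _ h(1)])
    show "integrable G (\<lambda>w. C * weight w ^ p)"
      by (intro integrable_mult_right integrable_weight_power)
    show "AE w in G. norm (h w) \<le> norm (C * weight w ^ p)"
      using h(3) by (intro AE_I2) (metis abs_ge_self order_trans real_norm_def)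
  qed
qed

lemma tame_bounded:
  assumes "h \<in> borel_measurable G" "\<And>w. w \<in> space G \<Longrightarrow> \<bar>h w\<bar> \<le> C"
  shows "tame h"
proof (rule tameI[OF assms(1), where C="\<bar>C\<bar>" and p=0])
  show "\<bar>h w\<bar> \<le> \<bar>C\<bar> * weight w ^ 0" if "w \<in> space G" for w
    using assms(2)[OF that] by simp
qed simp

lemma tame_const: "tame (\<lambda>w. c)"
  by (rule tame_bounded[where C="\<bar>c\<bar>"]) auto

lemma tame_component: "tame (\<lambda>w. w j)"
proof (cases "j \<in> V")
  case True
  show ?thesis
    by (rule tameI[where C=1 and p=1]) (use True measurable_component_G abs_component_le_weight in auto)
next
  case False
  then have undef: "w j = undefined" if "w \<in> space G" for w
    using that unfolding space_G by (auto simp: PiE_def extensional_def)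
  then have "(\<lambda>w. w j) \<in> borel_measurable G"
    using measurable_cong[of G "\<lambda>w. w j" "\<lambda>w. undefined"] by simp
  then show ?thesis by (rule tame_bounded[where C="\<bar>undefined\<bar>"]) (simp add: undef)
qed

lemma tame_add: "tame g \<Longrightarrow> tame h \<Longrightarrow> tame (\<lambda>w. g w + h w)"
proof (elim tameE)
  fix C1 p1 C2 p2
  assume g: "g \<in> borel_measurable G" "C1 \<ge> 0" "\<And>w. w \<in> space G \<Longrightarrow> \<bar>g w\<bar> \<le> C1 * weight w ^ p1"
    and h: "h \<in> borel_measurable G" "C2 \<ge> 0" "\<And>w. w \<in> space G \<Longrightarrow> \<bar>h w\<bar> \<le> C2 * weight w ^ p2"
  show "tame (\<lambda>w. g w + h w)"
  proof (rule tameI[where C="C1 + C2" and p="p1 + p2"])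
    fix w assume w: "w \<in> space G"
    have "weight w ^ p1 \<le> weight w ^ (p1 + p2)" "weight w ^ p2 \<le> weight w ^ (p1 + p2)"
      using weight_ge_1 by (auto intro: power_increasing)
    then have "C1 * weight w ^ p1 + C2 * weight w ^ p2 \<le> (C1 + C2) * weight w ^ (p1 + p2)"
      using g(2) h(2) by (simp add: distrib_right add_mono mult_left_mono)
    then show "\<bar>g w + h w\<bar> \<le> (C1 + C2) * weight w ^ (p1 + p2)"
      using g(3)[OF w] h(3)[OF w] by linarith
  qed (use g h in auto)
qed

lemma tame_mult: "tame g \<Longrightarrow> tame h \<Longrightarrow> tame (\<lambda>w. g w * h w)"
proof (elim tameE)
  fix C1 p1 C2 p2
  assume g: "g \<in> borel_measurable G" "C1 \<ge> 0" "\<And>w. w \<in> space G \<Longrightarrow> \<bar>g w\<bar> \<le> C1 * weight w ^ p1"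
    and h: "h \<in> borel_measurable G" "C2 \<ge> 0" "\<And>w. w \<in> space G \<Longrightarrow> \<bar>h w\<bar> \<le> C2 * weight w ^ p2"
  show "tame (\<lambda>w. g w * h w)"
  proof (rule tameI[where C="C1 * C2" and p="p1 + p2"])
    fix w assume w: "w \<in> space G"
    have "\<bar>g w * h w\<bar> \<le> (C1 * weight w ^ p1) * (C2 * weight w ^ p2)"
      unfolding abs_mult using g(3)[OF w] h(3)[OF w] by (intro mult_mono) auto
    then show "\<bar>g w * h w\<bar> \<le> (C1 * C2) * weight w ^ (p1 + p2)"
      by (simp add: power_add algebra_simps)
  qed (use g h in auto)
qed

lemma tame_cmult: "tame h \<Longrightarrow> tame (\<lambda>w. c * h w)"
  by (rule tame_mult[OF tame_const])

lemma tame_diff: "tame g \<Longrightarrow> tame h \<Longrightarrow> tame (\<lambda>w. g w - h w)"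
  using tame_add[of g "\<lambda>w. (-1) * h w"] tame_cmult[of h "-1"] by simp

lemma tame_sum: "finite T \<Longrightarrow> (\<And>x. x \<in> T \<Longrightarrow> tame (g x)) \<Longrightarrow> tame (\<lambda>w. \<Sum>x\<in>T. g x w)"
  by (induction T rule: finite_induct) (simp_all add: tame_const tame_add)

lemma tame_prod: "finite T \<Longrightarrow> (\<And>x. x \<in> T \<Longrightarrow> tame (g x)) \<Longrightarrow> tame (\<lambda>w. \<Prod>x\<in>T. g x w)"
  by (induction T rule: finite_induct) (simp_all add: tame_const tame_mult)

lemma tame_mlderiv: "(\<And>\<kappa>. \<kappa> < r \<Longrightarrow> tame (X \<kappa>)) \<Longrightarrow> tame (\<lambda>w. mlderiv r f \<iota> (\<lambda>\<kappa>. X \<kappa> w))"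
  unfolding mlderiv_def
  by (intro tame_sum finite_sets_containing tame_cmult tame_prod) (auto intro: finite_subset[of _ "{..<r}"])

lemma zero_on_measurable: "Q \<subseteq> V \<Longrightarrow> zero_on Q \<in> measurable G G"
  unfolding G_eq_PiM zero_on_def
  by (rule measurable_PiM_single')
    (auto simp: space_PiM PiE_iff extensional_def intro: measurable_component_singleton)

lemma tame_zero_on:
  assumes "Q \<subseteq> V" and "tame h"
  shows "tame (\<lambda>w. h (zero_on Q w))"
proof -
  obtain C p where h: "h \<in> borel_measurable G" "C \<ge> 0" "\<And>w. w \<in> space G \<Longrightarrow> \<bar>h w\<bar> \<le> C * weight w ^ p"
    using assms(2) unfolding tame_def by blast
  show ?thesis
  proof (rule tameI[OF _ h(2)])
    show "(\<lambda>w. h (zero_on Q w)) \<in> borel_measurable G"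
      using measurable_comp[OF zero_on_measurable[OF assms(1)] h(1)] by (simp add: o_def)
    fix w assume w: "w \<in> space G"
    have "zero_on Q w \<in> space G"
      using w assms(1) unfolding space_G zero_on_def by (auto simp: PiE_iff extensional_def)
    moreover have "weight (zero_on Q w) \<le> weight w"
      unfolding weight_def zero_on_def by (intro prod_mono) auto
    ultimately show "\<bar>h (zero_on Q w)\<bar> \<le> C * weight w ^ p"
      using h(2,3) weight_ge_1 by (meson dual_order.trans mult_left_mono power_mono zero_le_one)
  qed
qed

text \<open>The centred Gaussian replaces a coordinate entering affinely by its mean \<open>0\<close>.\<close>
lemma integral_update_zero:
  assumes m: "m \<in> V" and h: "tame h" and aff: "coord_affine m h"
  shows "integral\<^sup>L G h = integral\<^sup>L G (\<lambda>w. h (w(m := 0)))"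
proof -
  interpret N: prob_space N by (rule prob_space_N)
  interpret P: product_sigma_finite "\<lambda>_::'v. N"
    using product_prob_space_N by (simp add: product_prob_space_def)
  have N_UNIV: "measure N UNIV = 1" using N.prob_space by simp
  let ?I = "V - {m}"
  have GI: "G = PiM (insert m ?I) (\<lambda>_. N)" using m by (simp add: G_eq_PiM insert_absorb)
  have I: "finite ?I" "m \<notin> ?I" using finite_V by auto
  have iter: "integral\<^sup>L G g = (\<integral>x. (\<integral>y. g (x(m := y)) \<partial>N) \<partial>PiM ?I (\<lambda>_. N))" if "tame g" for g
  proof -
    have "integrable (PiM (insert m ?I) (\<lambda>_. N)) g"
      using tame_integrable[OF that] by (simp only: GI)
    then show ?thesis unfolding GI by (rule P.product_integral_insert[OF I])
  qed
  have h0: "tame (\<lambda>w. h (w(m := 0)))"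
    using tame_zero_on[of "{m}" h] m h by (simp add: zero_on_singleton)
  have inner: "(\<integral>y. h (x(m := y)) \<partial>N) = (\<integral>y. h ((x(m := y))(m := 0)) \<partial>N)" for x
  proof -
    have "(\<integral>y. h (x(m := y)) \<partial>N) = (\<integral>y. h (x(m := 0)) + y * (h (x(m := 1)) - h (x(m := 0))) \<partial>N)"
      by (rule Bochner_Integration.integral_cong[OF refl coord_affineD[OF aff]])
    also have "\<dots> = h (x(m := 0))"
      using integrable_N_id integral_N_id N_UNIV by (simp add: Bochner_Integration.integral_add)
    finally show ?thesis by (simp add: N_UNIV)
  qed
  show ?thesis
    unfolding iter[OF h] iter[OF h0] by (rule Bochner_Integration.integral_cong[OF refl inner])
qed

lemma integral_zero_on:
  assumes "finite Q" "Q \<subseteq> V" "tame h" "\<forall>m\<in>Q. coord_affine m h"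
  shows "integral\<^sup>L G h = integral\<^sup>L G (\<lambda>w. h (zero_on Q w))"
  using assms
proof (induction Q rule: finite_induct)
  case (insert m Q)
  have "integral\<^sup>L G (\<lambda>w. h (zero_on Q w)) = integral\<^sup>L G (\<lambda>w. h (zero_on Q (w(m := 0))))"
    using insert by (intro integral_update_zero tame_zero_on coord_affine_zero_on) auto
  then show ?case using insert by (simp add: zero_on_insert)
qed simp

lemma sets_gen_sigma: "sets (gen_sigma G B) = sigma_sets (space G) {(\<lambda>w. w j) -` A \<inter> space G | j A. j \<in> B \<and> A \<in> sets borel}"
  unfolding gen_sigma_def by (rule sets_measure_of) auto

lemma space_gen_sigma: "space (gen_sigma G B) = space G"
  unfolding gen_sigma_def by (rule space_measure_of) auto

lemma subalgebra_gen_sigma: "B \<subseteq> V \<Longrightarrow> subalgebra G (gen_sigma G B)"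
  unfolding subalgebra_def sets_gen_sigma space_gen_sigma
  by (auto intro!: sets.sigma_sets_subset measurable_sets measurable_component_G)

lemma coord_indep_indicator_gen_sigma:
  assumes A: "A \<in> sets (gen_sigma G B)" and m: "m \<in> V" "m \<notin> B"
  shows "coord_indep m (indicator A :: _ \<Rightarrow> real)"
proof -
  have "\<forall>w y. (w(m := y) \<in> A) = (w \<in> A)"
    using A[unfolded sets_gen_sigma]
  proof (induction rule: sigma_sets.induct)
    case (Basic a)
    then obtain j A where a: "a = (\<lambda>w. w j) -` A \<inter> space G" and "j \<in> B"
      by auto
    then have "j \<noteq> m" using m by auto
    then show ?case unfolding a using m by (auto simp: space_G PiE_iff extensional_def)
  next
    case (Compl a)
    then show ?case using m by (auto simp: space_G PiE_iff extensional_def)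
  qed auto
  then show ?thesis unfolding coord_indep_def indicator_def by simp
qed

text \<open>For \<open>A\<close> in the conditioning \<open>\<sigma>\<close>-algebra, \<open>indicator A\<close> ignores the coordinates outside
  \<open>B\<close>, so \<open>indicator A * g\<close> is still affine in them and they can be integrated out.\<close>
lemma real_cond_exp_eq_0_if_affine_outside:
  assumes B: "B \<subseteq> V" and g: "tame g" and aff: "\<forall>m\<in>V - B. coord_affine m g"
    and vanish: "\<forall>w\<in>space G. g (zero_on (V - B) w) = 0"
  shows "AE w in G. real_cond_exp G (gen_sigma G B) g w = 0"
proof -
  interpret prob_space G by (rule prob_space_G)
  interpret S: finite_measure_subalgebra G "gen_sigma G B"
    by unfold_locales (rule subalgebra_gen_sigma[OF B])
  show ?thesis
  proof (rule S.real_cond_exp_charact)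
    fix A assume A: "A \<in> sets (gen_sigma G B)"
    then have "A \<in> sets G" using subalgebra_gen_sigma[OF B] by (auto simp: subalgebra_def)
    then have "tame (indicator A)"
      by (intro tame_bounded[where C=1]) (auto simp: indicator_def)
    moreover have "\<forall>m\<in>V - B. coord_affine m (\<lambda>w. indicator A w * g w)"
      using aff coord_indep_indicator_gen_sigma[OF A] by (auto intro: coord_affine_mult_indep)
    ultimately have "integral\<^sup>L G (\<lambda>w. indicator A w * g w) =
        integral\<^sup>L G (\<lambda>w. indicator A (zero_on (V - B) w) * g (zero_on (V - B) w))"
      using finite_V by (intro integral_zero_on tame_mult g) auto
    then show "(\<integral>x\<in>A. g x \<partial>G) = (\<integral>x\<in>A. 0 \<partial>G)"
      using vanish by (simp add: set_lebesgue_integral_def cong: Bochner_Integration.integral_cong)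
  qed (auto intro: tame_integrable g)
qed

end

section \<open>Factor graphs of large girth\<close>

locale rooted_hypergraph =
  fixes V :: "'v set" and E :: "'f set" and vtx :: "'f \<Rightarrow> nat \<Rightarrow> 'v" and r :: nat and i :: 'v
  assumes hypergraph: "hypergraph V E vtx r" and root_in_V: "i \<in> V"
begin

definition incident :: "'f \<Rightarrow> 'v \<Rightarrow> bool" where
  "incident c v \<longleftrightarrow> c \<in> E \<and> v \<in> vtx c ` {..<r}"

definition adjacent :: "'v \<Rightarrow> 'v \<Rightarrow> bool" where
  "adjacent x y \<longleftrightarrow> (\<exists>c. incident c x \<and> incident c y)"

lemma adjacent_sym: "adjacent x y \<Longrightarrow> adjacent y x"
  unfolding adjacent_def by blast

lemma incident_in_V: "incident c v \<Longrightarrow> v \<in> V"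
  using hypergraph unfolding incident_def hypergraph_def by auto

lemma incident_vtx: "incident c j \<Longrightarrow> \<iota> < r \<Longrightarrow> incident c (vtx c \<iota>)"
  unfolding incident_def by auto

lemma fac_of_iff_incident: "c \<in> fac_of E vtx r j \<longleftrightarrow> incident c j"
  unfolding fac_of_def incident_def by auto

lemma finite_fac_of [simp]: "finite (fac_of E vtx r j)"
  using hypergraph by (auto simp: fac_of_def hypergraph_def)

lemma vtx_inj:
  assumes "incident c j" "\<kappa> < r" "\<kappa>' < r" "vtx c \<kappa> = vtx c \<kappa>'"
  shows "\<kappa> = \<kappa>'"
proof -
  have "inj_on (vtx c) {..<r}"
    using hypergraph assms(1) unfolding hypergraph_def incident_def by auto
  then show ?thesis using assms(2-4) by (auto dest: inj_onD)
qed

lemma pos_in_unique: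
  assumes "incident c j" "\<kappa> < r" "vtx c \<kappa> = j"
  shows "\<kappa> = pos_in vtx r c j"
proof -
  have "(THE \<kappa>'. \<kappa>' < r \<and> vtx c \<kappa>' = j) = \<kappa>"
    by (rule the_equality) (use assms vtx_inj[OF assms(1)] in blast)+
  then show ?thesis unfolding pos_in_def by simp
qed

lemma vtx_neq_pos_in: "incident c j \<Longrightarrow> \<kappa> < r \<Longrightarrow> \<kappa> \<noteq> pos_in vtx r c j \<Longrightarrow> vtx c \<kappa> \<noteq> j"
  using pos_in_unique by blast

text \<open>\<open>nbhd k s\<close> is the ball \<open>B_k(s)\<close> of the paper, without the restriction to \<open>V\<close>.\<close>
primrec nbhd :: "'v \<Rightarrow> nat \<Rightarrow> 'v set" where
  "nbhd k 0 = {k}"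
| "nbhd k (Suc s) = nbhd k s \<union> {z. \<exists>y\<in>nbhd k s. adjacent y z}"

lemma self_in_nbhd: "k \<in> nbhd k s"
  by (induction s) auto

lemma nbhd_mono: "s \<le> s' \<Longrightarrow> nbhd k s \<subseteq> nbhd k s'"
  by (induction s') (auto simp: le_Suc_eq)

lemma nbhd_trans: "x \<in> nbhd k s \<Longrightarrow> k \<in> nbhd j n \<Longrightarrow> x \<in> nbhd j (n + s)"
proof (induction s arbitrary: x)
  case (Suc s)
  then consider "x \<in> nbhd k s" | y where "y \<in> nbhd k s" "adjacent y x" by auto
  then show ?case
  proof cases
    case 1
    then show ?thesis using Suc by simp
  next
    case 2
    then show ?thesis using Suc.IH[of y] Suc.prems(2) by auto
  qed
qed simp

lemma nbhd_Suc_if_adjacent: "adjacent j k \<Longrightarrow> nbhd k s \<subseteq> nbhd j (Suc s)"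
proof
  fix x assume "adjacent j k" "x \<in> nbhd k s"
  moreover from this(1) have "k \<in> nbhd j 1" using self_in_nbhd[of j 0] by auto
  ultimately show "x \<in> nbhd j (Suc s)" using nbhd_trans[of x k s j 1] by simp
qed

lemma walk_in_nbhd: "(\<forall>t<k. adjacent (p t) (p (Suc t))) \<Longrightarrow> p k \<in> nbhd (p 0) k"
  by (induction k) auto

lemma nbhd_imp_walk:
  "x \<in> nbhd k s \<Longrightarrow> \<exists>k'\<le>s. \<exists>p. p 0 = k \<and> p k' = x \<and> (\<forall>t<k'. adjacent (p t) (p (Suc t)))"
proof (induction s arbitrary: x)
  case 0
  then show ?case by (intro exI[of _ 0]) auto
next
  case (Suc s)
  show ?case
  proof (cases "x \<in> nbhd k s")
    case True
    then show ?thesis using Suc.IH by (meson le_Suc_eq)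
  next
    case False
    then obtain y where y: "y \<in> nbhd k s" "adjacent y x" using Suc.prems by auto
    obtain k' p where "k' \<le> s" "p 0 = k" "p k' = y" "\<forall>t<k'. adjacent (p t) (p (Suc t))"
      using Suc.IH[OF y(1)] by blast
    then show ?thesis
      using y(2) by (intro exI[of _ "Suc k'"] conjI exI[of _ "p(Suc k' := x)"]) (auto simp: less_Suc_eq)
  qed
qed

lemma nbhd_root_subset_V: "nbhd i s \<subseteq> V"
proof (induction s)
  case (Suc s)
  have "z \<in> V" if "adjacent y z" for y z using that incident_in_V unfolding adjacent_def by blast
  then show ?case using Suc by auto
qed (use root_in_V in simp)

lemma ball_var_eq_nbhd: "ball_var V E vtx r i l = nbhd i l"
proof (intro set_eqI iffI)
  fix j assume "j \<in> ball_var V E vtx r i l"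
  then obtain k p where "k \<le> l" "p 0 = i" "p k = j"
    and "\<forall>t<k. p t \<in> V \<and> (\<exists>b\<in>E. p t \<in> vtx b ` {..<r} \<and> p (Suc t) \<in> vtx b ` {..<r})"
    unfolding ball_var_def by blast
  moreover from this(4) have "\<forall>t<k. adjacent (p t) (p (Suc t))"
    unfolding adjacent_def incident_def by blast
  ultimately show "j \<in> nbhd i l" using walk_in_nbhd[of k p] nbhd_mono[of k l] by auto
next
  fix j assume j: "j \<in> nbhd i l"
  then obtain k p where "k \<le> l" "p 0 = i" "p k = j" and walk: "\<forall>t<k. adjacent (p t) (p (Suc t))"
    using nbhd_imp_walk[of j i l] by blast
  moreover have "\<forall>t<k. p t \<in> V \<and> (\<exists>b\<in>E. p t \<in> vtx b ` {..<r} \<and> p (Suc t) \<in> vtx b ` {..<r})"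
    using walk incident_in_V unfolding adjacent_def incident_def by blast
  ultimately show "j \<in> ball_var V E vtx r i l"
    unfolding ball_var_def using j nbhd_root_subset_V by blast
qed

definition reachable :: "'v \<Rightarrow> bool" where
  "reachable x \<longleftrightarrow> (\<exists>t. x \<in> nbhd i t)"

definition depth :: "'v \<Rightarrow> nat" where
  "depth x = (LEAST t. x \<in> nbhd i t)"

lemma in_nbhd_depth: "reachable x \<Longrightarrow> x \<in> nbhd i (depth x)"
  unfolding reachable_def depth_def by (metis LeastI)

lemma in_nbhd_root_iff: "x \<in> nbhd i t \<longleftrightarrow> reachable x \<and> depth x \<le> t"
  unfolding reachable_def depth_def
  by (metis LeastI Least_le nbhd_mono subsetD)

lemma reachable_in_V: "reachable x \<Longrightarrow> x \<in> V"
  using in_nbhd_depth nbhd_root_subset_V by blast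

lemma reachable_root: "reachable i" and depth_root: "depth i = 0"
  using in_nbhd_root_iff[of i 0] by auto

lemma depth_eq_0: "reachable x \<Longrightarrow> depth x = 0 \<Longrightarrow> x = i"
  using in_nbhd_depth[of x] by auto

lemma adjacent_depth_le: "reachable x \<Longrightarrow> adjacent x y \<Longrightarrow> reachable y \<and> depth y \<le> Suc (depth x)"
  using in_nbhd_depth[of x] in_nbhd_root_iff[of y "Suc (depth x)"] by auto

lemma depth_le_adjacent: "reachable x \<Longrightarrow> adjacent x y \<Longrightarrow> depth x \<le> Suc (depth y)"
  using adjacent_depth_le[of x y] adjacent_depth_le[of y x] adjacent_sym by blast

lemma ex_parent:
  assumes "reachable x" "depth x = Suc D"
  shows "\<exists>c z. incident c z \<and> incident c x \<and> reachable z \<and> depth z = D"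
proof -
  have "x \<in> nbhd i (Suc D)" using assms in_nbhd_depth by fastforce
  moreover have "x \<notin> nbhd i D" using assms in_nbhd_root_iff by simp
  ultimately obtain y where "y \<in> nbhd i D" "adjacent y x" by auto
  moreover from this have "reachable y" "depth y = D"
    using adjacent_depth_le[of y x] assms in_nbhd_root_iff by auto
  ultimately show ?thesis unfolding adjacent_def by auto
qed

fun fg_adj :: "'v + 'f \<Rightarrow> 'v + 'f \<Rightarrow> bool" where
  "fg_adj (Inl v) (Inr c) = incident c v"
| "fg_adj (Inr c) (Inl v) = incident c v"
| "fg_adj _ _ = False"

lemma fg_adj_sym: "fg_adj x y \<Longrightarrow> fg_adj y x"
  by (cases x; cases y) auto

lemma fg_adj_isl: "fg_adj x y \<Longrightarrow> isl x \<noteq> isl y"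
  by (cases x; cases y) auto

definition closed_walk :: "(nat \<Rightarrow> 'v + 'f) \<Rightarrow> nat \<Rightarrow> bool" where
  "closed_walk C n \<longleftrightarrow> inj_on C {..<n} \<and> (\<forall>q<n. fg_adj (C q) (C (Suc q mod n)))"

lemma closed_walk_isl_iff_even:
  assumes "closed_walk C (2 * K)" "isl (C 0)" "q < 2 * K"
  shows "isl (C q) \<longleftrightarrow> even q"
  using assms(3)
proof (induction q)
  case (Suc q)
  then have "fg_adj (C q) (C (Suc q mod (2 * K)))"
    using assms(1) unfolding closed_walk_def by (meson Suc_lessD)
  then have "isl (C q) \<noteq> isl (C (Suc q))"
    using fg_adj_isl Suc.prems by simp
  then show ?case using Suc by auto
qed (use assms(2) in simp)

lemma fg_cycle_of_closed_walk_Inl: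
  assumes K: "2 \<le> K" and C: "closed_walk C (2 * K)" and "isl (C 0)"
  shows "fg_cycle E vtx r K"
proof -
  have inj: "inj_on C {..<2 * K}" and adj: "\<And>q. q < 2 * K \<Longrightarrow> fg_adj (C q) (C (Suc q mod (2 * K)))"
    using C unfolding closed_walk_def by auto
  note parity = closed_walk_isl_iff_even[OF C \<open>isl (C 0)\<close>]
  define vs where "vs t = projl (C (2 * t))" for t
  define fs where "fs t = projr (C (Suc (2 * t)))" for t
  have Cv: "C (2 * t) = Inl (vs t)" if "t < K" for t
    unfolding vs_def using parity[of "2 * t"] that by (cases "C (2 * t)") auto
  have Cf: "C (Suc (2 * t)) = Inr (fs t)" if "t < K" for t
    unfolding fs_def using parity[of "Suc (2 * t)"] that by (cases "C (Suc (2 * t))") auto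
  have injv: "inj_on vs {..<K}"
  proof (rule inj_onI)
    fix a b assume "a \<in> {..<K}" "b \<in> {..<K}" "vs a = vs b"
    then have "2 * a = 2 * b" using inj_onD[OF inj, of "2 * a" "2 * b"] Cv[of a] Cv[of b] by auto
    then show "a = b" by simp
  qed
  have injf: "inj_on fs {..<K}"
  proof (rule inj_onI)
    fix a b assume "a \<in> {..<K}" "b \<in> {..<K}" "fs a = fs b"
    then have "Suc (2 * a) = Suc (2 * b)"
      using inj_onD[OF inj, of "Suc (2 * a)" "Suc (2 * b)"] Cf[of a] Cf[of b] by auto
    then show "a = b" by simp
  qed
  have "incident (fs t) (vs t) \<and> incident (fs t) (vs (Suc t mod K))" if t: "t < K" for t
  proof -
    have "Suc (Suc (2 * t)) mod (2 * K) = 2 * (Suc t mod K)"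
      by (metis mult_Suc_right mod_mult_mult1 add_2_eq_Suc' add.commute)
    moreover have "Suc t mod K < K" using K by simp
    moreover have "fg_adj (C (2 * t)) (C (Suc (2 * t)))" using adj[of "2 * t"] t by simp
    moreover have "fg_adj (C (Suc (2 * t))) (C (Suc (Suc (2 * t)) mod (2 * K)))" using adj[of "Suc (2 * t)"] t by simp
    ultimately show ?thesis using t Cv[of t] Cf[of t] Cv[of "Suc t mod K"] by simp
  qed
  then have "\<forall>t<K. fs t \<in> E \<and> vs t \<in> vtx (fs t) ` {..<r} \<and> vs ((t + 1) mod K) \<in> vtx (fs t) ` {..<r}"
    unfolding incident_def by simp
  then show ?thesis
    unfolding fg_cycle_def using K injv injf by blast
qed

lemma fg_cycle_of_closed_walk:
  assumes K: "2 \<le> K" and C: "closed_walk C (2 * K)"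
  shows "fg_cycle E vtx r K"
proof (cases "isl (C 0)")
  case True
  then show ?thesis using fg_cycle_of_closed_walk_Inl[OF K C] by blast
next
  case False
  let ?n = "2 * K"
  define C' where "C' q = C (Suc q mod ?n)" for q
  have inj: "inj_on C {..<?n}" and adj: "\<And>q. q < ?n \<Longrightarrow> fg_adj (C q) (C (Suc q mod ?n))"
    using C unfolding closed_walk_def by auto
  have "inj_on C' {..<?n}"
  proof (rule inj_onI)
    fix a b assume "a \<in> {..<?n}" "b \<in> {..<?n}" "C' a = C' b"
    moreover from this have "Suc a mod ?n = Suc b mod ?n"
      using K inj_onD[OF inj] unfolding C'_def by auto
    ultimately show "a = b" by (auto simp: mod_Suc split: if_splits)
  qed
  moreover have "fg_adj (C' q) (C' (Suc q mod ?n))" if "q < ?n" for q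
    using adj[of "Suc q mod ?n"] K unfolding C'_def by (simp add: mod_Suc_eq)
  moreover have "isl (C' 0)"
    using adj[of 0] K False fg_adj_isl unfolding C'_def by fastforce
  ultimately show ?thesis
    using fg_cycle_of_closed_walk_Inl[OF K] unfolding closed_walk_def by blast
qed

definition factor_depth :: "'f \<Rightarrow> nat" where
  "factor_depth c = Min (depth ` vtx c ` {..<r})"

fun level :: "'v + 'f \<Rightarrow> nat" where
  "level (Inl v) = 2 * depth v"
| "level (Inr c) = 2 * factor_depth c + 1"

definition descending_walk :: "(nat \<Rightarrow> 'v + 'f) \<Rightarrow> nat \<Rightarrow> bool" where
  "descending_walk X n \<longleftrightarrow> (\<forall>p<n. fg_adj (X p) (X (Suc p))) \<and> (\<forall>p\<le>n. level (X p) = n - p)"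

definition walk_Cons :: "'v + 'f \<Rightarrow> (nat \<Rightarrow> 'v + 'f) \<Rightarrow> nat \<Rightarrow> 'v + 'f" where
  "walk_Cons x X p = (if p = 0 then x else X (p - 1))"

lemma descending_walk_Cons:
  "descending_walk X n \<Longrightarrow> fg_adj x (X 0) \<Longrightarrow> level x = Suc n \<Longrightarrow> descending_walk (walk_Cons x X) (Suc n)"
  unfolding descending_walk_def walk_Cons_def
  by (auto simp: less_Suc_eq_0_disj)

lemma descending_walk_inj:
  "descending_walk X n \<Longrightarrow> descending_walk Y n \<Longrightarrow> p \<le> n \<Longrightarrow> q \<le> n \<Longrightarrow> X p = Y q \<Longrightarrow> p = q"
  unfolding descending_walk_def by (metis diff_diff_cancel)

text \<open>\<open>X\<close> up to the first reunion \<open>p0\<close> of the two walks, then \<open>Y\<close> backwards: a closed walk.\<close>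
definition walk_glue :: "(nat \<Rightarrow> 'v + 'f) \<Rightarrow> (nat \<Rightarrow> 'v + 'f) \<Rightarrow> nat \<Rightarrow> nat \<Rightarrow> 'v + 'f" where
  "walk_glue X Y p0 q = (if q \<le> p0 then X q else Y (2 * p0 - q))"

context
  fixes X Y :: "nat \<Rightarrow> 'v + 'f" and n p0 :: nat
  assumes X: "descending_walk X n" and Y: "descending_walk Y n"
    and p0: "2 \<le> p0" "p0 \<le> n" "X p0 = Y p0" and apart: "\<And>p. 1 \<le> p \<Longrightarrow> p < p0 \<Longrightarrow> X p \<noteq> Y p"
begin

lemma inj_on_walk_glue: "inj_on (walk_glue X Y p0) {..<2 * p0}"
proof (rule inj_onI)
  have same_index: "p = q" if "p \<le> n" "q \<le> n" "Z p = Z' q" "Z \<in> {X, Y}" "Z' \<in> {X, Y}" for p q Z Z'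
    using that descending_walk_inj[OF X X] descending_walk_inj[OF X Y]
      descending_walk_inj[OF Y X] descending_walk_inj[OF Y Y] by auto
  have no_crossing: False if "q \<le> p0" "p0 < b" "b < 2 * p0" "X q = Y (2 * p0 - b)" for q b
  proof -
    have "q = 2 * p0 - b" using same_index[of q "2 * p0 - b" X Y] that p0 by auto
    then show False using apart[of q] that by auto
  qed
  fix a b assume ab: "a \<in> {..<2 * p0}" "b \<in> {..<2 * p0}" "walk_glue X Y p0 a = walk_glue X Y p0 b"
  show "a = b"
  proof (cases "a \<le> p0"; cases "b \<le> p0")
    assume "a \<le> p0" "b \<le> p0"
    then show ?thesis using ab same_index[of a b X X] p0 unfolding walk_glue_def by auto
  next
    assume "\<not> a \<le> p0" "\<not> b \<le> p0"
    moreover from this have "2 * p0 - a \<le> n" "2 * p0 - b \<le> n" using p0 by arith+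
    ultimately have "2 * p0 - a = 2 * p0 - b"
      using ab same_index[of "2 * p0 - a" "2 * p0 - b" Y Y] unfolding walk_glue_def by auto
    then show ?thesis using ab by auto
  qed (use ab no_crossing[of a b] no_crossing[of b a] in \<open>auto simp: walk_glue_def\<close>)
qed

lemma closed_walk_glue: "X 0 = Y 0 \<Longrightarrow> closed_walk (walk_glue X Y p0) (2 * p0)"
  unfolding closed_walk_def
proof (intro conjI inj_on_walk_glue allI impI)
  fix q assume start: "X 0 = Y 0" and q: "q < 2 * p0"
  have X_adj: "fg_adj (X p) (X (Suc p))" and Y_adj: "fg_adj (Y p) (Y (Suc p))" if "p < n" for p
    using X Y that unfolding descending_walk_def by auto
  consider "q < p0" | "p0 \<le> q" "Suc q < 2 * p0" | "Suc q = 2 * p0" using q by linarith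
  then show "fg_adj (walk_glue X Y p0 q) (walk_glue X Y p0 (Suc q mod (2 * p0)))"
  proof cases
    case 1
    then show ?thesis using X_adj[of q] p0 unfolding walk_glue_def by auto
  next
    case 2
    then have "fg_adj (Y (2 * p0 - q)) (Y (2 * p0 - Suc q))"
      using Y_adj[of "2 * p0 - Suc q"] p0 fg_adj_sym by (auto simp: Suc_diff_Suc)
    then show ?thesis using 2 p0 unfolding walk_glue_def by (auto simp: le_Suc_eq)
  next
    case 3
    then have "2 * p0 - q = 1" by simp
    then show ?thesis using 3 Y_adj[of 0] p0 start fg_adj_sym unfolding walk_glue_def by auto
  qed
qed

end

lemma fg_cycle_of_descending_walks:
  assumes X: "descending_walk X n" and Y: "descending_walk Y n" and n: "1 \<le> n"
    and start: "X 0 = Y 0" and stop: "X n = Y n" and split: "X 1 \<noteq> Y 1"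
  shows "\<exists>K. 2 \<le> K \<and> K \<le> n \<and> fg_cycle E vtx r K"
proof -
  define p0 where "p0 = (LEAST p. 1 \<le> p \<and> X p = Y p)"
  have p0: "1 \<le> p0" "X p0 = Y p0" "p0 \<le> n"
    using LeastI[of "\<lambda>p. 1 \<le> p \<and> X p = Y p", OF conjI[OF n stop]]
      Least_le[of "\<lambda>p. 1 \<le> p \<and> X p = Y p", OF conjI[OF n stop]]
    unfolding p0_def by auto
  have apart: "X p \<noteq> Y p" if "1 \<le> p" "p < p0" for p
    using not_less_Least[of p "\<lambda>p. 1 \<le> p \<and> X p = Y p"] that unfolding p0_def by auto
  have "2 \<le> p0" using p0 split by (cases "p0 = 1") auto
  then have "closed_walk (walk_glue X Y p0) (2 * p0)"
    using closed_walk_glue[OF X Y _ p0(3,2) apart start] by blast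
  then have "fg_cycle E vtx r p0" by (rule fg_cycle_of_closed_walk[OF \<open>2 \<le> p0\<close>])
  then show ?thesis using \<open>2 \<le> p0\<close> p0 by blast
qed

lemma factor_depth_eqI:
  assumes "c \<in> E" "\<And>w. incident c w \<Longrightarrow> n \<le> depth w" "incident c z" "depth z = n"
  shows "factor_depth c = n"
  unfolding factor_depth_def
proof (rule Min_eqI)
  show "n \<le> y" if "y \<in> depth ` vtx c ` {..<r}" for y
    using that assms(1,2) unfolding incident_def by auto
  show "n \<in> depth ` vtx c ` {..<r}"
    using assms(3,4) unfolding incident_def by auto
qed simp

lemma factor_depth_toward_root:
  assumes "incident c x" "reachable x" "incident c y" "depth y = depth x - 1"
  shows "factor_depth c = depth x - 1"
proof (rule factor_depth_eqI)
  show "depth x - 1 \<le> depth w" if "incident c w" for w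
    using depth_le_adjacent[OF assms(2), of w] assms(1) that unfolding adjacent_def by force
qed (use assms in \<open>auto simp: incident_def\<close>)

end

locale girth_hypergraph = rooted_hypergraph V E vtx r i
  for V :: "'v set" and E :: "'f set" and vtx :: "'f \<Rightarrow> nat \<Rightarrow> 'v" and r :: nat and i :: 'v +
  fixes L :: nat
  assumes girth: "girth_ge E vtx r (4 * L + 4)"
begin

lemma no_short_cycle: "K \<le> 2 * L + 1 \<Longrightarrow> \<not> fg_cycle E vtx r K"
  using girth unfolding girth_ge_def by auto

text \<open>Chosen with \<open>SOME\<close>; meaningful only for reachable \<open>v \<noteq> i\<close>.\<close>
definition parent_edge :: "'v \<Rightarrow> 'f \<times> 'v" where
  "parent_edge v = (SOME cz. incident (fst cz) (snd cz) \<and> incident (fst cz) v \<and>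
     reachable (snd cz) \<and> depth (snd cz) = depth v - 1)"

definition parent_factor :: "'v \<Rightarrow> 'f" where
  "parent_factor v = fst (parent_edge v)"

definition parent :: "'v \<Rightarrow> 'v" where
  "parent v = snd (parent_edge v)"

lemma parent:
  assumes "reachable v" "1 \<le> depth v"
  shows "incident (parent_factor v) (parent v)" "incident (parent_factor v) v"
    and "reachable (parent v)" "depth (parent v) = depth v - 1"
proof -
  obtain D where "depth v = Suc D" using assms(2) by (cases "depth v") auto
  then have "\<exists>cz. incident (fst cz) (snd cz) \<and> incident (fst cz) v \<and>
      reachable (snd cz) \<and> depth (snd cz) = depth v - 1"
    using ex_parent[OF assms(1)] by auto
  from someI_ex[OF this]
  show "incident (parent_factor v) (parent v)" "incident (parent_factor v) v"
    and "reachable (parent v)" "depth (parent v) = depth v - 1"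
    unfolding parent_factor_def parent_def parent_edge_def by auto
qed

definition root_path :: "'v \<Rightarrow> nat \<Rightarrow> 'v + 'f" where
  "root_path v p = (if even p then Inl ((parent ^^ (p div 2)) v)
                    else Inr (parent_factor ((parent ^^ (p div 2)) v)))"

lemma root_path_Cons:
  "root_path v = walk_Cons (Inl v) (walk_Cons (Inr (parent_factor v)) (root_path (parent v)))"
proof
  fix p
  consider "p = 0" | "p = 1" | q where "p = Suc (Suc q)" by (metis One_nat_def not0_implies_Suc)
  then show "root_path v p = walk_Cons (Inl v) (walk_Cons (Inr (parent_factor v)) (root_path (parent v))) p"
    by cases (simp_all add: root_path_def walk_Cons_def funpow_swap1)
qed

lemma descending_walk_root_path:
  "reachable v \<Longrightarrow> descending_walk (root_path v) (2 * depth v) \<and> root_path v (2 * depth v) = Inl i"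
proof (induction "depth v" arbitrary: v)
  case 0
  then have "v = i" using depth_eq_0 by simp
  then show ?case using depth_root by (simp add: descending_walk_def root_path_def)
next
  case (Suc D)
  have p: "incident (parent_factor v) (parent v)" "incident (parent_factor v) v"
    "reachable (parent v)" "depth (parent v) = D"
    using parent[OF Suc.prems] Suc.hyps(2) by auto
  have IH: "descending_walk (root_path (parent v)) (2 * D)" "root_path (parent v) (2 * D) = Inl i"
    using Suc.hyps(1)[OF p(4)[symmetric] p(3)] p(4) by auto
  have "factor_depth (parent_factor v) = D"
    using factor_depth_toward_root[OF p(2) Suc.prems p(1)] p(4) Suc.hyps(2) by simp
  then have walk: "descending_walk (walk_Cons (Inr (parent_factor v)) (root_path (parent v))) (Suc (2 * D))"
    using p(1) by (intro descending_walk_Cons[OF IH(1)]) (auto simp: root_path_def)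
  have "descending_walk (root_path v) (Suc (Suc (2 * D)))"
    unfolding root_path_Cons[of v] using p(2) Suc.hyps(2)
    by (intro descending_walk_Cons[OF walk]) (auto simp: walk_Cons_def)
  moreover have "root_path v (Suc (Suc (2 * D))) = Inl i"
    using IH(2) by (subst root_path_Cons) (simp add: walk_Cons_def)
  ultimately show ?case by (simp flip: Suc.hyps(2))
qed

lemma descending_walk_from_factor:
  assumes y: "reachable y" "incident c y" and shallowest: "\<And>w. incident c w \<Longrightarrow> depth y \<le> depth w"
  shows "descending_walk (walk_Cons (Inr c) (root_path y)) (Suc (2 * depth y))"
    and "walk_Cons (Inr c) (root_path y) (Suc (2 * depth y)) = Inl i"
proof -
  have "factor_depth c = depth y"
    using y shallowest by (intro factor_depth_eqI) (auto simp: incident_def)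
  then show "descending_walk (walk_Cons (Inr c) (root_path y)) (Suc (2 * depth y))"
    using descending_walk_root_path[OF y(1)] y(2)
    by (intro descending_walk_Cons) (auto simp: root_path_def)
  show "walk_Cons (Inr c) (root_path y) (Suc (2 * depth y)) = Inl i"
    using descending_walk_root_path[OF y(1)] by (simp add: walk_Cons_def)
qed

lemma shallowest_vertex_unique:
  assumes "incident c y1" "incident c y2" "reachable y1" "depth y1 = n" "depth y2 = n"
    and shallowest: "\<And>w. incident c w \<Longrightarrow> n \<le> depth w" and "n \<le> L"
  shows "y1 = y2"
proof (rule ccontr)
  assume ne: "y1 \<noteq> y2"
  have "reachable y2" using adjacent_depth_le[OF assms(3)] assms(1,2) unfolding adjacent_def by blast
  then have X: "descending_walk (walk_Cons (Inr c) (root_path y1)) (Suc (2 * n))"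
    "walk_Cons (Inr c) (root_path y1) (Suc (2 * n)) = Inl i"
    and Y: "descending_walk (walk_Cons (Inr c) (root_path y2)) (Suc (2 * n))"
    "walk_Cons (Inr c) (root_path y2) (Suc (2 * n)) = Inl i"
    using descending_walk_from_factor[of y1 c] descending_walk_from_factor[of y2 c] assms by auto
  have "walk_Cons (Inr c) (root_path y1) 1 \<noteq> walk_Cons (Inr c) (root_path y2) 1"
    using ne by (simp add: walk_Cons_def root_path_def)
  then obtain K where "2 \<le> K" "K \<le> Suc (2 * n)" "fg_cycle E vtx r K"
    using fg_cycle_of_descending_walks[OF X(1) Y(1)] X(2) Y(2) by (auto simp: walk_Cons_def)
  then show False using no_short_cycle \<open>n \<le> L\<close> by auto
qed

definition hangs_from :: "'v \<Rightarrow> 'f \<Rightarrow> bool" where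
  "hangs_from k c \<longleftrightarrow> reachable k \<and> 1 \<le> depth k \<and> incident c k \<and> (\<exists>z. incident c z \<and> depth z = depth k - 1)"

lemma hangs_from_shallowest:
  assumes "hangs_from k c" "incident c w"
  shows "depth k - 1 \<le> depth w"
  using assms depth_le_adjacent[of k w] unfolding hangs_from_def adjacent_def by force

lemma parent_factor_unique:
  assumes c1: "hangs_from x c1" and c2: "hangs_from x c2" and "depth x \<le> L"
  shows "c1 = c2"
proof (rule ccontr)
  assume ne: "c1 \<noteq> c2"
  obtain D where D: "depth x = Suc D" using c1 unfolding hangs_from_def by (cases "depth x") auto
  obtain y1 y2 where y: "incident c1 y1" "depth y1 = D" "incident c2 y2" "depth y2 = D"
    using c1 c2 D unfolding hangs_from_def by auto
  have x: "reachable x" "incident c1 x" "incident c2 x"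
    using c1 c2 unfolding hangs_from_def by auto
  have walk: "descending_walk (walk_Cons (Inl x) (walk_Cons (Inr c) (root_path y))) (Suc (Suc (2 * D)))
      \<and> walk_Cons (Inl x) (walk_Cons (Inr c) (root_path y)) (Suc (Suc (2 * D))) = Inl i"
    if "hangs_from x c" "incident c y" "depth y = D" for c y
  proof -
    have "reachable y" "incident c x"
      using that adjacent_depth_le[of x y] unfolding hangs_from_def adjacent_def by auto
    then have "descending_walk (walk_Cons (Inr c) (root_path y)) (Suc (2 * D))"
      "walk_Cons (Inr c) (root_path y) (Suc (2 * D)) = Inl i"
      using descending_walk_from_factor[of y c] that hangs_from_shallowest[OF that(1)] D by auto
    then show ?thesis
      using descending_walk_Cons[of _ "Suc (2 * D)" "Inl x"] \<open>incident c x\<close> D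
      by (simp add: walk_Cons_def)
  qed
  note W1 = walk[OF c1 y(1,2)] and W2 = walk[OF c2 y(3,4)]
  have "walk_Cons (Inl x) (walk_Cons (Inr c1) (root_path y1)) 1 \<noteq>
      walk_Cons (Inl x) (walk_Cons (Inr c2) (root_path y2)) 1"
    using ne by (simp add: walk_Cons_def)
  then have "\<exists>K. 2 \<le> K \<and> K \<le> Suc (Suc (2 * D)) \<and> fg_cycle E vtx r K"
    by (rule fg_cycle_of_descending_walks[OF conjunct1[OF W1] conjunct1[OF W2], rotated 3])
      (use W1 W2 in \<open>simp_all add: walk_Cons_def\<close>)
  then obtain K where "2 \<le> K" "K \<le> Suc (Suc (2 * D))" "fg_cycle E vtx r K" by blast
  then show False using no_short_cycle \<open>depth x \<le> L\<close> D by auto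
qed

lemma parent_unique:
  assumes "hangs_from x c" "depth x \<le> L" "adjacent y1 x" "adjacent y2 x"
    "depth y1 = depth x - 1" "depth y2 = depth x - 1"
  shows "y1 = y2"
proof -
  obtain c1 c2 where c: "incident c1 y1" "incident c1 x" "incident c2 y2" "incident c2 x"
    using assms(3,4) unfolding adjacent_def by blast
  then have "hangs_from x c1" "hangs_from x c2"
    using assms(1,5,6) unfolding hangs_from_def by auto
  then have "c1 = c2" using parent_factor_unique assms(2) by blast
  moreover have "reachable y1"
    using adjacent_depth_le[of x y1] assms(1,3) adjacent_sym unfolding hangs_from_def by blast
  ultimately show ?thesis
    using shallowest_vertex_unique[of c1 y1 y2 "depth x - 1"] c assms hangs_from_shallowest[OF \<open>hangs_from x c1\<close>]
    by auto
qed

lemma child_hangs_from: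
  assumes k: "hangs_from k c" "depth k \<le> L" and c': "incident c' k" "c' \<noteq> c" "incident c' k'" "k' \<noteq> k"
  shows "hangs_from k' c' \<and> depth k' = Suc (depth k)"
proof -
  have rk: "reachable k" "1 \<le> depth k" using k(1) unfolding hangs_from_def by auto
  have adj: "adjacent k w" if "incident c' w" for w using c'(1) that unfolding adjacent_def by blast
  have not_up: "depth w \<noteq> depth k - 1" if "incident c' w" for w
  proof
    assume "depth w = depth k - 1"
    then have "hangs_from k c'" using rk c'(1) that unfolding hangs_from_def by blast
    then show False using parent_factor_unique k c'(2) by blast
  qed
  have lower: "depth k \<le> depth w" if "incident c' w" for w
    using depth_le_adjacent[OF rk(1) adj[OF that]] not_up[OF that] by linarith
  have rk': "reachable k'" and upper: "depth k' \<le> Suc (depth k)"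
    using adjacent_depth_le[OF rk(1) adj[OF c'(3)]] by auto
  have "depth k' \<noteq> depth k"
    using shallowest_vertex_unique[OF c'(1,3) rk(1) refl _ lower k(2)] c'(4) by auto
  then have "depth k' = Suc (depth k)" using lower[OF c'(3)] upper by linarith
  then show ?thesis using rk' c' unfolding hangs_from_def by auto
qed

lemma child_of_root_hangs_from:
  assumes "incident c i" "incident c k" "k \<noteq> i"
  shows "hangs_from k c \<and> depth k = 1"
proof -
  have "adjacent i k" using assms unfolding adjacent_def by blast
  then have "reachable k" "depth k \<le> 1"
    using adjacent_depth_le[OF reachable_root] depth_root by auto
  moreover have "depth k \<noteq> 0" using depth_eq_0 \<open>reachable k\<close> assms(3) by blast
  ultimately show ?thesis
    using assms depth_root unfolding hangs_from_def by auto
qed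

lemma eq_if_common_descendant:
  assumes "reachable k1" "reachable k2" "depth k1 = D" "depth k2 = D" "D + s \<le> L"
    "m \<in> nbhd k1 s" "m \<in> nbhd k2 s" "D + s \<le> depth m"
  shows "k1 = k2"
  using assms
proof (induction s arbitrary: m)
  case (Suc s)
  have k: "k1 \<in> nbhd i D" "k2 \<in> nbhd i D" using Suc.prems in_nbhd_root_iff by auto
  have far: "m \<notin> nbhd k s" if "k \<in> nbhd i D" for k
    using nbhd_trans[of m k s i D] that Suc.prems(8) in_nbhd_root_iff by auto
  obtain y1 y2 where y: "y1 \<in> nbhd k1 s" "adjacent y1 m" "y2 \<in> nbhd k2 s" "adjacent y2 m"
    using Suc.prems(6,7) far[OF k(1)] far[OF k(2)] by auto
  have "y1 \<in> nbhd i (D + s)" "y2 \<in> nbhd i (D + s)"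
    using nbhd_trans y(1,3) k by blast+
  then have ry: "reachable y1" "reachable y2" "depth y1 \<le> D + s" "depth y2 \<le> D + s"
    using in_nbhd_root_iff by auto
  have dm: "reachable m" "depth m \<le> Suc (depth y1)" "depth m \<le> Suc (depth y2)"
    using adjacent_depth_le[OF ry(1) y(2)] adjacent_depth_le[OF ry(2) y(4)] by auto
  then have dy: "depth m = Suc (D + s)" "depth y1 = D + s" "depth y2 = D + s"
    using ry Suc.prems(8) by linarith+
  obtain c where "incident c y1" "incident c m" using y(2) unfolding adjacent_def by blast
  then have "hangs_from m c" using dm(1) dy unfolding hangs_from_def by auto
  then have "y1 = y2"
    using parent_unique[OF _ _ y(2) y(4)] dy Suc.prems(5) by auto
  then show ?case using Suc.IH[of y1] Suc.prems y dy by auto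
qed simp

end

section \<open>The message passing algorithm\<close>

locale message_passing = girth_hypergraph V E vtx r i L + gaussian_product V \<delta>
  for V :: "'v set" and E :: "'f set" and vtx :: "'f \<Rightarrow> nat \<Rightarrow> 'v" and r :: nat and i :: 'v
    and L :: nat and \<delta> :: real +
  fixes f :: "(nat \<Rightarrow> real) \<Rightarrow> real" and d :: nat and Fto :: "nat \<Rightarrow> (nat \<Rightarrow> real) \<Rightarrow> real" and K :: real
  assumes no_linear_coef: "\<forall>\<iota><r. fcoef r f {\<iota>} = 0"
    and Fto: "\<forall>k<L. Fto k \<in> borel_measurable (PiM {1..k} (\<lambda>_. borel)) \<and>
                 (\<forall>x\<in>space (PiM {1..k} (\<lambda>_. borel :: real measure)). \<bar>Fto k x\<bar> \<le> K)"
begin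

abbreviation hist :: "('v \<Rightarrow> real) \<Rightarrow> nat \<Rightarrow> nat \<Rightarrow> 'v \<Rightarrow> 'f \<Rightarrow> real" where
  "hist \<omega> l \<equiv> whist r f d E vtx Fto \<omega> l"

definition msg :: "nat \<Rightarrow> 'v \<Rightarrow> 'f \<Rightarrow> ('v \<Rightarrow> real) \<Rightarrow> real" where
  "msg s j b \<omega> = hist \<omega> s s j b"

definition incr :: "nat \<Rightarrow> 'v \<Rightarrow> 'f \<Rightarrow> ('v \<Rightarrow> real) \<Rightarrow> real" where
  "incr s j b \<omega> = msg s j b \<omega> - msg (s - 1) j b \<omega>"

definition zmsg :: "nat \<Rightarrow> 'v \<Rightarrow> 'f \<Rightarrow> ('v \<Rightarrow> real) \<Rightarrow> real" where
  "zmsg s j b \<omega> = z_of Fto \<omega> (hist \<omega> s) s j b"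

definition coef :: "nat \<Rightarrow> 'v \<Rightarrow> 'f \<Rightarrow> ('v \<Rightarrow> real) \<Rightarrow> real" where
  "coef t j b \<omega> = Fto (t - 1) (restrict (\<lambda>t'. incr t' j b \<omega>) {1..t - 1})"

text \<open>\<open>dsum T s j\<close> is \<open>\<Sum>c\<in>T. D_{j;c} f(z^s_{\<partial>c->c})\<close>; both kinds of messages are rescaled
  sums of this form.\<close>
definition dsum :: "'f set \<Rightarrow> nat \<Rightarrow> 'v \<Rightarrow> ('v \<Rightarrow> real) \<Rightarrow> real" where
  "dsum T s j \<omega> = (\<Sum>c\<in>T. mlderiv r f (pos_in vtx r c j) (\<lambda>\<iota>. zmsg s (vtx c \<iota>) c \<omega>))"

definition dsum_incr :: "'f set \<Rightarrow> nat \<Rightarrow> 'v \<Rightarrow> ('v \<Rightarrow> real) \<Rightarrow> real" where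
  "dsum_incr T s j \<omega> = dsum T s j \<omega> - (if s = 0 then 0 else dsum T (s - 1) j \<omega>)"

lemma hist_0: "hist \<omega> l 0 = (\<lambda>j b. 0)"
  by (induction l) auto

lemma hist_stable: "s \<le> l \<Longrightarrow> hist \<omega> l s = hist \<omega> s s"
  by (induction l) (auto simp: le_Suc_eq)

lemma msg_0: "msg 0 j b = (\<lambda>_. 0)"
  unfolding msg_def by (simp add: hist_0)

lemma msg_Suc: "msg (Suc s) j b \<omega> = 1 / sqrt (real d - 1) * dsum (fac_of E vtx r j - {b}) s j \<omega>"
  unfolding msg_def dsum_def zmsg_def using hist_stable[of s s \<omega>] by (simp add: w_new_def)

lemma incr_Suc: "incr (Suc s) j b \<omega> = 1 / sqrt (real d - 1) * dsum_incr (fac_of E vtx r j - {b}) s j \<omega>"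
  by (cases s) (simp_all add: incr_def dsum_incr_def msg_Suc msg_0 right_diff_distrib)

lemma zmsg_eq: "zmsg s j b \<omega> = \<omega> j + (\<Sum>t\<in>{1..s}. coef t j b \<omega> * incr t j b \<omega>)"
proof -
  have u: "u_of (hist \<omega> s) t j b = incr t j b \<omega>" if "t \<le> s" for t
    unfolding u_of_def incr_def msg_def using hist_stable[of t s] hist_stable[of "t - 1" s] that by simp
  have "restrict (\<lambda>t. u_of (hist \<omega> s) t j b) {1..t - 1} = restrict (\<lambda>t'. incr t' j b \<omega>) {1..t - 1}"
    if "t \<in> {1..s}" for t
    using that u by (intro restrict_ext) auto
  then show ?thesis
    unfolding zmsg_def z_of_def coef_def using u by (intro arg_cong2[where f="(+)"] refl sum.cong) auto
qed

lemma zmsg_0: "zmsg 0 j b \<omega> = \<omega> j"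
  by (simp add: zmsg_eq)

lemma zmsg_Suc: "zmsg (Suc s) j b \<omega> = zmsg s j b \<omega> + coef (Suc s) j b \<omega> * incr (Suc s) j b \<omega>"
  by (simp add: zmsg_eq)

lemma umsg_eq_dsum_incr:
  "umsg r f d E vtx Fto (Suc l) j a = (\<lambda>\<omega>. 1 / sqrt (real d - 1) * dsum_incr (fac_of E vtx r j - {a}) l j \<omega>)"
  using incr_Suc unfolding incr_def msg_def umsg_def wmsg_def by auto

lemma ufull_eq_dsum_incr:
  "ufull r f d E vtx Fto (Suc l) j = (\<lambda>\<omega>. 1 / sqrt (real d) * dsum_incr (fac_of E vtx r j) l j \<omega>)"
  by (cases l) (auto simp: ufull_def wfull_def dsum_incr_def dsum_def zmsg_def right_diff_distrib)

lemma tame_coef: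
  assumes "1 \<le> t" "t - 1 < L" and "\<And>t'. t' \<in> {1..t - 1} \<Longrightarrow> incr t' j b \<in> borel_measurable G"
  shows "tame (coef t j b)"
proof (rule tame_bounded)
  have "(\<lambda>\<omega>. restrict (\<lambda>t'. incr t' j b \<omega>) {1..t - 1}) \<in> measurable G (PiM {1..t - 1} (\<lambda>_. borel))"
    using assms(3) by (rule measurable_restrict)
  then show "coef t j b \<in> borel_measurable G"
    using measurable_comp Fto assms(1,2) unfolding coef_def[abs_def] o_def by blast
  show "\<bar>coef t j b \<omega>\<bar> \<le> K" for \<omega>
    using Fto assms(1,2) unfolding coef_def by (auto simp: space_PiM)
qed

lemma tame_msg_zmsg: "s \<le> L \<Longrightarrow> tame (msg s j b) \<and> tame (zmsg s j b)"
proof (induction s arbitrary: j b rule: less_induct)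
  case (less s)
  have msg: "tame (msg t j b)" if "t \<le> s" for t j b
  proof (cases t)
    case 0
    then show ?thesis by (simp add: msg_0 tame_const)
  next
    case (Suc t')
    then show ?thesis
      unfolding Suc msg_Suc[abs_def] dsum_def using less that Suc
      by (intro tame_cmult tame_sum tame_mlderiv) auto
  qed
  have incr: "tame (incr t j b)" if "t \<le> s" for t j b
    unfolding incr_def[abs_def] using msg that by (intro tame_diff) auto
  have "tame (zmsg s j b)"
    unfolding zmsg_eq[abs_def]
  proof (intro tame_add tame_component tame_sum finite_atLeastAtMost tame_mult)
    fix t assume t: "t \<in> {1..s}"
    then show "tame (incr t j b)" using incr by auto
    show "tame (coef t j b)"
      using t less.prems incr by (intro tame_coef) (auto simp: tame_def)
  qed
  then show ?case using msg by simp
qed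

lemma tame_dsum_incr: "T \<subseteq> fac_of E vtx r j \<Longrightarrow> s \<le> L \<Longrightarrow> tame (dsum_incr T s j)"
proof -
  assume T: "T \<subseteq> fac_of E vtx r j" and s: "s \<le> L"
  have "tame (dsum T t j)" if "t \<le> L" for t
    unfolding dsum_def[abs_def] using finite_subset[OF T] tame_msg_zmsg[OF that]
    by (intro tame_sum tame_mlderiv) auto
  then show ?thesis
    unfolding dsum_incr_def[abs_def] using s by (cases s) (auto intro: tame_diff)
qed

lemma msg_zmsg_local:
  "m \<notin> nbhd j s \<Longrightarrow> coord_indep m (msg s j b) \<and> coord_indep m (zmsg s j b)"
proof (induction s arbitrary: j b rule: less_induct)
  case (less s)
  have msg: "coord_indep m (msg t j b)" if "t \<le> s" for t
  proof (cases t)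
    case 0
    then show ?thesis by (simp add: msg_0 coord_indep_const)
  next
    case (Suc t')
    show ?thesis
      unfolding Suc msg_Suc[abs_def] dsum_def
    proof (intro coord_indep_comp2[where F="(*)"] coord_indep_const coord_indep_sum mlderiv_coord_indep)
      fix c \<kappa> assume "c \<in> fac_of E vtx r j - {b}" "\<kappa> < r"
      then have "adjacent j (vtx c \<kappa>)"
        unfolding adjacent_def by (auto simp: fac_of_iff_incident intro: incident_vtx)
      then have "nbhd (vtx c \<kappa>) t' \<subseteq> nbhd j s"
        using nbhd_Suc_if_adjacent[of j "vtx c \<kappa>" t'] nbhd_mono[of t s j] that Suc by auto
      then show "coord_indep m (zmsg t' (vtx c \<kappa>) c)"
        using less.IH[of t'] less.prems Suc that by auto
    qed
  qed
  have incr: "coord_indep m (incr t j b)" if "t \<le> s" for t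
    unfolding incr_def[abs_def] using msg that by (intro coord_indep_comp2[where F="(-)"]) auto
  have "m \<noteq> j" using less.prems self_in_nbhd by metis
  then have "coord_indep m (zmsg s j b)"
    unfolding zmsg_eq[abs_def] coef_def[abs_def]
    using incr by (intro coord_indep_comp2[where F="(+)"] coord_indep_component coord_indep_sum
        coord_indep_comp2[where F="(*)"] coord_indep_comp[where F="Fto _"] coord_indep_restrict) auto
  then show ?case using msg by simp
qed

lemma incr_local: "m \<notin> nbhd j s \<Longrightarrow> t \<le> s \<Longrightarrow> coord_indep m (incr t j b)"
proof -
  assume "m \<notin> nbhd j s" "t \<le> s"
  moreover have "t - 1 \<le> s" using \<open>t \<le> s\<close> by simp
  ultimately have "m \<notin> nbhd j t" "m \<notin> nbhd j (t - 1)" using nbhd_mono[of _ s j] by blast+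
  then show ?thesis
    unfolding incr_def[abs_def] using msg_zmsg_local by (intro coord_indep_comp2[where F="(-)"]) auto
qed

lemma coef_local: "m \<notin> nbhd j s \<Longrightarrow> t \<le> Suc s \<Longrightarrow> coord_indep m (coef t j b)"
  unfolding coef_def[abs_def] using incr_local
  by (intro coord_indep_comp[where F="Fto _"] coord_indep_restrict) auto

definition child_factors :: "'f set \<Rightarrow> 'v \<Rightarrow> bool" where
  "child_factors T k \<longleftrightarrow> T \<subseteq> fac_of E vtx r k \<and>
     (\<forall>c\<in>T. \<forall>\<kappa><r. \<kappa> \<noteq> pos_in vtx r c k \<longrightarrow> hangs_from (vtx c \<kappa>) c \<and> depth (vtx c \<kappa>) = Suc (depth k))"

lemma child_factors_root: "T \<subseteq> fac_of E vtx r i \<Longrightarrow> child_factors T i"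
  unfolding child_factors_def
proof (rule conjI, assumption, intro ballI allI impI)
  fix c \<kappa> assume "T \<subseteq> fac_of E vtx r i" "c \<in> T" "\<kappa> < r" "\<kappa> \<noteq> pos_in vtx r c i"
  moreover from this have "incident c i" by (auto simp: fac_of_iff_incident)
  ultimately show "hangs_from (vtx c \<kappa>) c \<and> depth (vtx c \<kappa>) = Suc (depth i)"
    using child_of_root_hangs_from[of c "vtx c \<kappa>"] incident_vtx vtx_neq_pos_in depth_root by simp
qed

lemma child_factors_hangs_from:
  assumes "hangs_from k c" "depth k \<le> L"
  shows "child_factors (fac_of E vtx r k - {c}) k"
  unfolding child_factors_def
proof (rule conjI, blast, intro ballI allI impI)
  fix c' \<kappa> assume "c' \<in> fac_of E vtx r k - {c}" "\<kappa> < r" "\<kappa> \<noteq> pos_in vtx r c' k"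
  moreover from this have "incident c' k" by (auto simp: fac_of_iff_incident)
  ultimately show "hangs_from (vtx c' \<kappa>) c' \<and> depth (vtx c' \<kappa>) = Suc (depth k)"
    using child_hangs_from[OF assms, of c' "vtx c' \<kappa>"] incident_vtx vtx_neq_pos_in by simp
qed

lemma child_factors_nbhd:
  assumes "child_factors T k" "c \<in> T" "\<kappa> < r"
  shows "nbhd (vtx c \<kappa>) s \<subseteq> nbhd k (Suc s)"
proof -
  have "incident c k" using assms(1,2) unfolding child_factors_def by (auto simp: fac_of_iff_incident)
  then have "adjacent k (vtx c \<kappa>)" using assms(3) incident_vtx unfolding adjacent_def by blast
  then show ?thesis by (rule nbhd_Suc_if_adjacent)
qed

text \<open>At most one child of \<open>k\<close> in \<open>c\<close> sees the far coordinate \<open>m\<close> (the layers form a tree),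
  and \<open>f\<close> is multilinear.\<close>
lemma mlderiv_zmsg_affine:
  assumes T: "child_factors T k" "c \<in> T" and L: "Suc (depth k) + s \<le> L"
    and far: "m \<notin> nbhd i (depth k + s)"
    and aff: "\<And>\<kappa>. \<kappa> < r \<Longrightarrow> \<kappa> \<noteq> pos_in vtx r c k \<Longrightarrow> m \<in> nbhd (vtx c \<kappa>) s \<Longrightarrow>
      coord_affine m (zmsg s (vtx c \<kappa>) c)"
  shows "coord_affine m (\<lambda>\<omega>. mlderiv r f (pos_in vtx r c k) (\<lambda>\<kappa>. zmsg s (vtx c \<kappa>) c \<omega>))"
proof (cases "\<exists>\<kappa>. \<kappa> < r \<and> \<kappa> \<noteq> pos_in vtx r c k \<and> m \<in> nbhd (vtx c \<kappa>) s")
  case True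
  then obtain \<kappa>\<^sub>0 where \<kappa>\<^sub>0: "\<kappa>\<^sub>0 < r" "\<kappa>\<^sub>0 \<noteq> pos_in vtx r c k" "m \<in> nbhd (vtx c \<kappa>\<^sub>0) s" by blast
  have kid: "reachable (vtx c \<kappa>) \<and> depth (vtx c \<kappa>) = Suc (depth k)"
    if "\<kappa> < r" "\<kappa> \<noteq> pos_in vtx r c k" for \<kappa>
    using T that unfolding child_factors_def hangs_from_def by auto
  show ?thesis
  proof (rule mlderiv_coord_affine[where \<kappa>\<^sub>0=\<kappa>\<^sub>0])
    show "coord_affine m (zmsg s (vtx c \<kappa>\<^sub>0) c)" using aff \<kappa>\<^sub>0 by blast
    fix \<kappa> assume \<kappa>: "\<kappa> < r" "\<kappa> \<noteq> pos_in vtx r c k" "\<kappa> \<noteq> \<kappa>\<^sub>0"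
    have "m \<notin> nbhd (vtx c \<kappa>) s"
    proof
      assume m: "m \<in> nbhd (vtx c \<kappa>) s"
      moreover have "vtx c \<kappa> \<in> nbhd i (Suc (depth k))" using kid[OF \<kappa>(1,2)] by (subst in_nbhd_root_iff) simp
      ultimately have "reachable m" using nbhd_trans in_nbhd_root_iff by blast
      then have "Suc (depth k) + s \<le> depth m" using far in_nbhd_root_iff by simp
      then have "vtx c \<kappa> = vtx c \<kappa>\<^sub>0"
        using eq_if_common_descendant[OF _ _ _ _ L m \<kappa>\<^sub>0(3)] kid \<kappa> \<kappa>\<^sub>0 by auto
      then show False
        using vtx_inj[of c k \<kappa> \<kappa>\<^sub>0] T \<kappa> \<kappa>\<^sub>0 unfolding child_factors_def by (auto simp: fac_of_iff_incident)
    qed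
    then show "coord_indep m (zmsg s (vtx c \<kappa>) c)" using msg_zmsg_local by blast
  qed
next
  case False
  then show ?thesis
    using msg_zmsg_local by (intro coord_indep_imp_affine mlderiv_coord_indep) blast
qed

lemma dsum_incr_affine_if_children_affine:
  assumes T: "child_factors T k" "reachable k" and L: "Suc (depth k) + s \<le> L"
    and far: "m \<notin> nbhd i (depth k + s)"
    and aff: "\<And>c \<kappa>. c \<in> T \<Longrightarrow> \<kappa> < r \<Longrightarrow> \<kappa> \<noteq> pos_in vtx r c k \<Longrightarrow> m \<in> nbhd (vtx c \<kappa>) s \<Longrightarrow>
      coord_affine m (zmsg s (vtx c \<kappa>) c)"
  shows "coord_affine m (dsum_incr T s k)"
proof -
  have fin: "finite T" using T(1) finite_subset[OF _ finite_fac_of] unfolding child_factors_def by blast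
  have "coord_affine m (dsum T s k)"
    unfolding dsum_def[abs_def] using T(1) L far aff
    by (intro coord_affine_sum[OF fin] mlderiv_zmsg_affine) auto
  moreover have "coord_indep m (dsum T (s - 1) k)" if "1 \<le> s"
    unfolding dsum_def[abs_def]
  proof (intro coord_indep_sum mlderiv_coord_indep)
    fix c \<kappa> assume "c \<in> T" "\<kappa> < r"
    then have "nbhd (vtx c \<kappa>) (s - 1) \<subseteq> nbhd i (depth k + s)"
      using child_factors_nbhd[OF T(1)] nbhd_trans[of _ k s i "depth k"] in_nbhd_depth[OF T(2)] that
      by fastforce
    then show "coord_indep m (zmsg (s - 1) (vtx c \<kappa>) c)" using far msg_zmsg_local by blast
  qed
  ultimately show ?thesis
    unfolding dsum_incr_def[abs_def]
    by (cases "s = 0") (auto intro: coord_affine_diff coord_indep_imp_affine)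
qed

lemma zmsg_affine:
  "hangs_from k c \<Longrightarrow> depth k + s \<le> L \<Longrightarrow> m \<notin> nbhd i (depth k + s - 1) \<Longrightarrow>
    coord_affine m (zmsg s k c)"
proof (induction s arbitrary: k c)
  case 0
  then show ?case by (simp add: zmsg_0 coord_affine_component)
next
  case (Suc s)
  have k: "reachable k" "depth k \<le> L" using Suc.prems unfolding hangs_from_def by auto
  have far: "m \<notin> nbhd i (depth k + s)" using Suc.prems(3) by simp
  then have local: "m \<notin> nbhd k s"
    using nbhd_trans[of m k s i "depth k"] in_nbhd_depth[OF k(1)] by auto
  have "coord_affine m (incr (Suc s) k c)"
    unfolding incr_Suc[abs_def]
  proof (intro coord_affine_cmult dsum_incr_affine_if_children_affine)
    show "child_factors (fac_of E vtx r k - {c}) k"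
      using child_factors_hangs_from Suc.prems(1) k(2) by blast
    fix c' \<kappa> assume c': "c' \<in> fac_of E vtx r k - {c}" "\<kappa> < r" "\<kappa> \<noteq> pos_in vtx r c' k"
    then have "hangs_from (vtx c' \<kappa>) c'" "depth (vtx c' \<kappa>) = Suc (depth k)"
      using child_factors_hangs_from[OF Suc.prems(1) k(2)] unfolding child_factors_def by auto
    then show "coord_affine m (zmsg s (vtx c' \<kappa>) c')"
      using Suc.IH Suc.prems(2) far by simp
  qed (use Suc.prems k far in auto)
  then show ?case
    unfolding zmsg_Suc[abs_def] using msg_zmsg_local[OF local] coef_local[OF local]
    by (intro coord_affine_add coord_indep_imp_affine[of m "zmsg s k c"] coord_affine_mult_indep) auto
qed

lemma dsum_incr_affine:
  assumes "T \<subseteq> fac_of E vtx r i" "Suc l \<le> L" "m \<notin> nbhd i l"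
  shows "coord_affine m (dsum_incr T l i)"
proof (rule dsum_incr_affine_if_children_affine[OF child_factors_root[OF assms(1)] reachable_root])
  fix c \<kappa> assume "c \<in> T" "\<kappa> < r" "\<kappa> \<noteq> pos_in vtx r c i"
  then have "hangs_from (vtx c \<kappa>) c" "depth (vtx c \<kappa>) = 1"
    using child_factors_root[OF assms(1)] depth_root unfolding child_factors_def by auto
  then show "coord_affine m (zmsg l (vtx c \<kappa>) c)"
    using zmsg_affine assms(2,3) by simp
qed (use assms depth_root in auto)

text \<open>Zeroing the inputs outside \<open>B_i(l)\<close> freezes the messages from step \<open>l\<close> on; the first
  step uses \<open>D f(0) = 0\<close>, as \<open>f\<close> has no degree-one coefficients.\<close>
lemma dsum_incr_vanishes:
  assumes zero: "\<And>m. m \<in> V \<Longrightarrow> m \<notin> nbhd i l \<Longrightarrow> \<omega> m = 0" and l: "l < L"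
  shows "child_factors T k \<Longrightarrow> reachable k \<Longrightarrow> depth k + s = l \<Longrightarrow> dsum_incr T s k \<omega> = 0"
proof (induction s arbitrary: T k)
  case 0
  have "mlderiv r f (pos_in vtx r c k) (\<lambda>\<kappa>. \<omega> (vtx c \<kappa>)) = 0" if "c \<in> T" for c
  proof (rule mlderiv_eq_0[OF no_linear_coef])
    fix \<kappa> assume "\<kappa> < r" "\<kappa> \<noteq> pos_in vtx r c k"
    then have "reachable (vtx c \<kappa>)" "depth (vtx c \<kappa>) = Suc l"
      using 0 that unfolding child_factors_def hangs_from_def by auto
    then show "\<omega> (vtx c \<kappa>) = 0" using zero reachable_in_V in_nbhd_root_iff by simp
  qed
  then show ?case by (simp add: dsum_incr_def dsum_def zmsg_0)
next
  case (Suc s)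
  have "zmsg (Suc s) (vtx c \<kappa>) c \<omega> = zmsg s (vtx c \<kappa>) c \<omega>"
    if "c \<in> T" "\<kappa> < r" "\<kappa> \<noteq> pos_in vtx r c k" for c \<kappa>
  proof -
    have kid: "hangs_from (vtx c \<kappa>) c" "depth (vtx c \<kappa>) = Suc (depth k)"
      using Suc.prems(1) that unfolding child_factors_def by auto
    then have "dsum_incr (fac_of E vtx r (vtx c \<kappa>) - {c}) s (vtx c \<kappa>) \<omega> = 0"
      using Suc.IH child_factors_hangs_from[OF kid(1)] Suc.prems(3) l
      unfolding hangs_from_def by auto
    then show ?thesis by (simp add: zmsg_Suc incr_Suc)
  qed
  then have "dsum T (Suc s) k \<omega> = dsum T s k \<omega>"
    unfolding dsum_def by (intro sum.cong refl mlderiv_cong) auto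
  then show ?case by (simp add: dsum_incr_def)
qed

lemma real_cond_exp_dsum_incr_eq_0:
  assumes "T \<subseteq> fac_of E vtx r i" "Suc l \<le> L"
  shows "integrable G (\<lambda>\<omega>. a * dsum_incr T l i \<omega>)"
    and "AE \<omega> in G. real_cond_exp G (gen_sigma G (nbhd i l)) (\<lambda>\<omega>. a * dsum_incr T l i \<omega>) \<omega> = 0"
proof -
  have tame: "tame (\<lambda>\<omega>. a * dsum_incr T l i \<omega>)"
    using assms by (intro tame_cmult tame_dsum_incr) auto
  then show "integrable G (\<lambda>\<omega>. a * dsum_incr T l i \<omega>)" by (rule tame_integrable)
  have "dsum_incr T l i (zero_on (V - nbhd i l) \<omega>) = 0" for \<omega>
    using dsum_incr_vanishes[where l=l and \<omega>="zero_on (V - nbhd i l) \<omega>"] child_factors_root[OF assms(1)]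
      reachable_root depth_root assms(2)
    by (simp add: zero_on_def)
  then show "AE \<omega> in G. real_cond_exp G (gen_sigma G (nbhd i l)) (\<lambda>\<omega>. a * dsum_incr T l i \<omega>) \<omega> = 0"
    using assms dsum_incr_affine nbhd_root_subset_V
    by (intro real_cond_exp_eq_0_if_affine_outside tame) (auto intro: coord_affine_cmult)
qed

end

theorem mainTheorem4:
  fixes r d :: nat and f :: "(nat \<Rightarrow> real) \<Rightarrow> real" and \<delta> K :: real
    and V :: "'v set" and E :: "'f set" and vtx :: "'f \<Rightarrow> nat \<Rightarrow> 'v"
    and Fto Fl :: "nat \<Rightarrow> (nat \<Rightarrow> real) \<Rightarrow> real"
    and i :: 'v and a :: 'f and l :: nat
  assumes r: "r \<ge> 2"
    and f_bool: "\<forall>x\<in>cube r. f x \<in> {0, 1}"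
    and f_deg1: "\<forall>\<iota><r. fcoef r f {\<iota>} = 0"
    and delta: "\<delta> > 0"
    and hyp: "hypergraph V E vtx r"
    and reg: "index_regular V E vtx r d"
    and girth: "girth_ge E vtx r (4 * nat \<lfloor>1 / \<delta>\<rfloor> + 4)"
    and K: "K > 0"
    and Fto: "\<forall>k < nat \<lfloor>1 / \<delta>\<rfloor>. Fto k \<in> borel_measurable (PiM {1..k} (\<lambda>_. borel)) \<and>
                 (\<forall>x\<in>space (PiM {1..k} (\<lambda>_. borel :: real measure)). \<bar>Fto k x\<bar> \<le> K)"
    and Fl: "\<forall>k < nat \<lfloor>1 / \<delta>\<rfloor>. Fl k \<in> borel_measurable (PiM {1..k} (\<lambda>_. borel)) \<and>
                 (\<forall>x\<in>space (PiM {1..k} (\<lambda>_. borel :: real measure)). \<bar>Fl k x\<bar> \<le> K)"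
    and i: "i \<in> V"
    and a: "a \<in> fac_of E vtx r i"
    and l: "l < nat \<lfloor>1 / \<delta>\<rfloor>"
  shows "integrable (gauss_space \<delta> V) (umsg r f d E vtx Fto (Suc l) i a) \<and>
         (AE \<omega> in gauss_space \<delta> V.
            real_cond_exp (gauss_space \<delta> V)
              (gen_sigma (gauss_space \<delta> V) (ball_var V E vtx r i l))
              (umsg r f d E vtx Fto (Suc l) i a) \<omega> = 0) \<and>
         integrable (gauss_space \<delta> V) (ufull r f d E vtx Fto (Suc l) i) \<and>
         (AE \<omega> in gauss_space \<delta> V.
            real_cond_exp (gauss_space \<delta> V)
              (gen_sigma (gauss_space \<delta> V) (ball_var V E vtx r i l))
              (ufull r f d E vtx Fto (Suc l) i) \<omega> = 0)"
proof -
  interpret message_passing V E vtx r i "nat \<lfloor>1 / \<delta>\<rfloor>" \<delta> f d Fto K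
    using hyp i girth delta f_deg1 Fto
    by unfold_locales (auto simp: hypergraph_def)
  have "Suc l \<le> nat \<lfloor>1 / \<delta>\<rfloor>" using l by simp
  then show ?thesis
    unfolding ball_var_eq_nbhd umsg_eq_dsum_incr ufull_eq_dsum_incr
    using real_cond_exp_dsum_incr_eq_0[of "fac_of E vtx r i - {a}" l]
      real_cond_exp_dsum_incr_eq_0[of "fac_of E vtx r i" l]
    by blast
qed

end
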